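(* Every global protocol that is implementable under $\mathtt{bag}$ is implementable under $\mathtt{p2p}$, and every global protocol that is implementable under $\mathtt{p2p}$ is implementable under $\mathtt{sb}$.
   Context: Alphabets. $\mathcal{P}$ participants, $\mathcal{V}$ message values. $\Gamma=\{p\to q:m\mid p,q\in\mathcal{P},m\in\mathcal{V}\}$. $\Sigma=\Sigma_!\cup\Sigma_?$ with $\mathsf{snd}(p,q,m)$ ($p$ sends $m$ to $q$) and $\mathsf{rcv}(p,q,m)$ ($q$ receives $m$ from $p$); $\Sigma_p$ = sends by $p$ and receives by $p$. $w\Downarrow_\Delta$ deletes letters outside $\Delta$; $\le$ prefix order, $\mathrm{pref}$ finite prefixes. $\mathrm{split}:\Gamma^\infty\to\Sigma^\infty$, $p\to q:m\mapsto\mathsf{snd}(p,q,m)\mathsf{rcv}(p,q,m)$. $w\equiv w'$ iff equal projections onto every $\Sigma_p$; $[W]_\equiv$ closure under $\equiv$. Network architectures. Channels $C$, $\xi:\mathcal{P}\times\mathcal{P}\to C$, buffers with contents $B$, empty $b_0$, partial $\mathit{insert}(\mu),\mathit{remove}(\mu)$ for $\mu\in\mathcal{P}\times\mathcal{P}\times\mathcal{V}$. Channel states map channels to contents, initially all $b_0$ ($\chi_0$); $\mathsf{snd}(p,q,m)$ inserts $(p,q,m)$ into channel $\xi(p,q)$, $\mathsf{rcv}(p,q,m)$ removes it from $\xi(p,q)$. A word is channel-compliant if all operations are defined (infinite words: all finite prefixes); $\mathcal{L}(\mathbb{A})$ is the set of such words. FIFO buffers: sequences, insert appends, $\mathit{remove}(\mu)$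 defined iff $\mu$ is at the head and then removes it. Bag buffers: finite multisets, insert adds a copy, $\mathit{remove}(\mu)$ defined iff $\mu$ present, removes a copy. $\mathtt{p2p}$: FIFO, $\xi(p,q)=(p,q)$. $\mathtt{sb}$: FIFO, $C=\mathcal{P}$, $\xi(p,q)=p$. $\mathtt{bag}$: bag buffers, single channel. CLTS over $\mathbb{A}$: family of deterministic LTSs $T_p$ over $\Sigma_p$; a send moves the sender and inserts into the channel, a receive moves the receiver and removes from the channel (must be defined). Final configuration: all local states final and channels empty ($\chi_0$). Language: traces of finite runs ending in final configurations plus traces of infinite runs. Deadlock-free: every reachable non-final configuration has an outgoing transition. Global protocol: LTS $\mathcal{S}=(S,\Gamma,T,s_0,F)$ that is sink-final (final states have no outgoing transitions), has sender-driven choice (all outgoing transitions of a state share their sender and have pairwise distinct labels), and is deadlock-free (every reachable state is final or has an outgoing transition); $\mathcal{L}(\mathcal{S})$ is its set of maximal traces (finite ending in $F$, or infinite). Semantics: $\mathcal{L}_{\mathbb{A}}(\mathcal{S})=([\Sigma^*\cap\mathrm{split}(\mathcal{L}(\mathcal{S}))]_\equiv\cap\mathcal{L}(\mathbb{A}))\cup\{w\in\Sigma^\omega\mid\forall\text{ finite }u\le w.\ u\in\mathrm{pref}([\mathrm{split}(\mathcal{L}(\mathcal{S}))]_\equiv\cap\mathcal{L}(\mathbb{A}))\}$. $\mathcal{S}$ is implementable under $\mathbb{A}$ if there is a deadlock-free CLTS over $\mathbb{A}$ whose language equals $\mathcal{L}_{\mathbb{A}}(\mathcal{S})$. *)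

theory Defs
  imports Main "HOL-Library.Infinite_Set" "HOL-Library.Multiset"
begin

datatype ('p, 'v) msg = Msg 'p 'p 'v

datatype ('p, 'v) act = Snd 'p 'p 'v | Rcv 'p 'p 'v

fun sender :: "('p, 'v) msg \<Rightarrow> 'p" where
  "sender (Msg p q m) = p"

fun actor :: "('p, 'v) act \<Rightarrow> 'p" where
  "actor (Snd p q m) = p"
| "actor (Rcv p q m) = q"

fun act_msg :: "('p, 'v) act \<Rightarrow> 'p \<times> 'p \<times> 'v" where
  "act_msg (Snd p q m) = (p, q, m)"
| "act_msg (Rcv p q m) = (p, q, m)"

definition Sigma_p :: "'p \<Rightarrow> ('p, 'v) act set" where
  "Sigma_p p = {a. actor a = p}"

datatype 'a word = Fin "'a list" | Inf "nat \<Rightarrow> 'a"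

definition is_fin :: "'a word \<Rightarrow> bool" where
  "is_fin w = (\<exists>u. w = Fin u)"

definition is_inf :: "'a word \<Rightarrow> bool" where
  "is_inf w = (\<exists>f. w = Inf f)"

fun fprefix :: "'a list \<Rightarrow> 'a word \<Rightarrow> bool" where
  "fprefix u (Fin v) = (\<exists>v'. v = u @ v')"
| "fprefix u (Inf f) = (u = map f [0..<length u])"

definition pref :: "'a word set \<Rightarrow> 'a list set" where
  "pref W = {u. \<exists>w\<in>W. fprefix u w}"

(* w \<Down>_\<Delta>: delete all letters outside \<Delta> *)
fun wproj :: "'a set \<Rightarrow> 'a word \<Rightarrow> 'a word" where
  "wproj D (Fin u) = Fin (filter (\<lambda>a. a \<in> D) u)"
| "wproj D (Inf f) =
     (if infinite {i. f i \<in> D}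
      then Inf (\<lambda>n. f (Infinite_Set.enumerate {i. f i \<in> D} n))
      else Fin (filter (\<lambda>a. a \<in> D)
                 (map f [0..<(LEAST N. \<forall>i\<ge>N. f i \<notin> D)])))"

fun split_msg :: "('p, 'v) msg \<Rightarrow> ('p, 'v) act list" where
  "split_msg (Msg p q m) = [Snd p q m, Rcv p q m]"

fun split_word :: "('p, 'v) msg word \<Rightarrow> ('p, 'v) act word" where
  "split_word (Fin u) = Fin (concat (map split_msg u))"
| "split_word (Inf g) = Inf (\<lambda>n. split_msg (g (n div 2)) ! (n mod 2))"

definition interswap_eq :: "('p, 'v) act word \<Rightarrow> ('p, 'v) act word \<Rightarrow> bool" where
  "interswap_eq w w' = (\<forall>p. wproj (Sigma_p p) w = wproj (Sigma_p p) w')"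

definition eq_closure :: "('p, 'v) act word set \<Rightarrow> ('p, 'v) act word set" where
  "eq_closure W = {w. \<exists>w'\<in>W. interswap_eq w w'}"

record ('p, 'v, 'c, 'b) arch =
  chan :: "'p \<Rightarrow> 'p \<Rightarrow> 'c"
  empty_buf :: 'b
  insert_buf :: "'p \<times> 'p \<times> 'v \<Rightarrow> 'b \<Rightarrow> 'b option"
  remove_buf :: "'p \<times> 'p \<times> 'v \<Rightarrow> 'b \<Rightarrow> 'b option"

fun ch_step :: "('p, 'v, 'c, 'b) arch \<Rightarrow> ('c \<Rightarrow> 'b) \<Rightarrow> ('p, 'v) act \<Rightarrow> ('c \<Rightarrow> 'b) option" where
  "ch_step A \<chi> (Snd p q m) =
     (case insert_buf A (p, q, m) (\<chi> (chan A p q)) of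
        None \<Rightarrow> None | Some b \<Rightarrow> Some (\<chi>(chan A p q := b)))"
| "ch_step A \<chi> (Rcv p q m) =
     (case remove_buf A (p, q, m) (\<chi> (chan A p q)) of
        None \<Rightarrow> None | Some b \<Rightarrow> Some (\<chi>(chan A p q := b)))"

definition chi0 :: "('p, 'v, 'c, 'b) arch \<Rightarrow> ('c \<Rightarrow> 'b)" where
  "chi0 A = (\<lambda>c. empty_buf A)"

fun ch_run :: "('p, 'v, 'c, 'b) arch \<Rightarrow> ('c \<Rightarrow> 'b) \<Rightarrow> ('p, 'v) act list \<Rightarrow> ('c \<Rightarrow> 'b) option" where
  "ch_run A \<chi> [] = Some \<chi>"
| "ch_run A \<chi> (a # w) = (case ch_step A \<chi> a of None \<Rightarrow> None | Some \<chi>' \<Rightarrow> ch_run A \<chi>' w)"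

definition compliant :: "('p, 'v, 'c, 'b) arch \<Rightarrow> ('p, 'v) act list \<Rightarrow> bool" where
  "compliant A w = (ch_run A (chi0 A) w \<noteq> None)"

definition arch_lang :: "('p, 'v, 'c, 'b) arch \<Rightarrow> ('p, 'v) act word set" where
  "arch_lang A = {Fin w |w. compliant A w} \<union> {Inf f |f. \<forall>n. compliant A (map f [0..<n])}"

definition fifo_insert :: "'m \<Rightarrow> 'm list \<Rightarrow> 'm list option" where
  "fifo_insert \<mu> b = Some (b @ [\<mu>])"

fun fifo_remove :: "'m \<Rightarrow> 'm list \<Rightarrow> 'm list option" where
  "fifo_remove \<mu> [] = None"
| "fifo_remove \<mu> (\<nu> # b) = (if \<nu> = \<mu> then Some b else None)"

definition bag_insert :: "'m \<Rightarrow> 'm multiset \<Rightarrow> 'm multiset option" where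
  "bag_insert \<mu> b = Some (add_mset \<mu> b)"

definition bag_remove :: "'m \<Rightarrow> 'm multiset \<Rightarrow> 'm multiset option" where
  "bag_remove \<mu> b = (if \<mu> \<in># b then Some (b - {#\<mu>#}) else None)"

definition p2p :: "('p, 'v, 'p \<times> 'p, ('p \<times> 'p \<times> 'v) list) arch" where
  "p2p = \<lparr>chan = (\<lambda>p q. (p, q)), empty_buf = [],
          insert_buf = fifo_insert, remove_buf = fifo_remove\<rparr>"

definition sb :: "('p, 'v, 'p, ('p \<times> 'p \<times> 'v) list) arch" where
  "sb = \<lparr>chan = (\<lambda>p q. p), empty_buf = [],
         insert_buf = fifo_insert, remove_buf = fifo_remove\<rparr>"

definition bag :: "('p, 'v, unit, ('p \<times> 'p \<times> 'v) multiset) arch" where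
  "bag = \<lparr>chan = (\<lambda>p q. ()), empty_buf = {#},
          insert_buf = bag_insert, remove_buf = bag_remove\<rparr>"

record ('q, 'a) dlts =
  dinit :: 'q
  ddelta :: "'q \<Rightarrow> 'a \<Rightarrow> 'q option"
  dfinal :: "'q set"

type_synonym ('q, 'p, 'v) clts = "'p \<Rightarrow> ('q, ('p, 'v) act) dlts"

definition clts_wf :: "('q, 'p, 'v) clts \<Rightarrow> bool" where
  "clts_wf T = (\<forall>p q a. a \<notin> Sigma_p p \<longrightarrow> ddelta (T p) q a = None)"

type_synonym ('q, 'p, 'c, 'b) config = "('p \<Rightarrow> 'q) \<times> ('c \<Rightarrow> 'b)"

definition cinit :: "('p, 'v, 'c, 'b) arch \<Rightarrow> ('q, 'p, 'v) clts \<Rightarrow> ('q, 'p, 'c, 'b) config" where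
  "cinit A T = ((\<lambda>p. dinit (T p)), chi0 A)"

definition cstep :: "('p, 'v, 'c, 'b) arch \<Rightarrow> ('q, 'p, 'v) clts \<Rightarrow>
    ('q, 'p, 'c, 'b) config \<Rightarrow> ('p, 'v) act \<Rightarrow> ('q, 'p, 'c, 'b) config \<Rightarrow> bool" where
  "cstep A T c a c' =
     (\<exists>q' \<chi>'. ddelta (T (actor a)) (fst c (actor a)) a = Some q'
            \<and> ch_step A (snd c) a = Some \<chi>'
            \<and> c' = ((fst c)(actor a := q'), \<chi>'))"

inductive creach :: "('p, 'v, 'c, 'b) arch \<Rightarrow> ('q, 'p, 'v) clts \<Rightarrow>
    ('q, 'p, 'c, 'b) config \<Rightarrow> ('p, 'v) act list \<Rightarrow> ('q, 'p, 'c, 'b) config \<Rightarrow> bool"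
  for A T where
  creach_nil: "creach A T c [] c"
| creach_step: "cstep A T c a c' \<Longrightarrow> creach A T c' w c'' \<Longrightarrow> creach A T c (a # w) c''"

definition cfinal :: "('p, 'v, 'c, 'b) arch \<Rightarrow> ('q, 'p, 'v) clts \<Rightarrow> ('q, 'p, 'c, 'b) config \<Rightarrow> bool" where
  "cfinal A T c = ((\<forall>p. fst c p \<in> dfinal (T p)) \<and> snd c = chi0 A)"

definition clts_lang :: "('p, 'v, 'c, 'b) arch \<Rightarrow> ('q, 'p, 'v) clts \<Rightarrow> ('p, 'v) act word set" where
  "clts_lang A T =
     {Fin w |w. \<exists>c. creach A T (cinit A T) w c \<and> cfinal A T c}
   \<union> {Inf f |f. \<exists>\<rho>. \<rho> 0 = cinit A T \<and> (\<forall>n. cstep A T (\<rho> n) (f n) (\<rho> (Suc n)))}"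

definition clts_deadlock_free :: "('p, 'v, 'c, 'b) arch \<Rightarrow> ('q, 'p, 'v) clts \<Rightarrow> bool" where
  "clts_deadlock_free A T =
     (\<forall>w c. creach A T (cinit A T) w c \<and> \<not> cfinal A T c \<longrightarrow> (\<exists>a c'. cstep A T c a c'))"

record ('s, 'p, 'v) gproto =
  gtrans :: "('s \<times> ('p, 'v) msg \<times> 's) set"
  ginit :: 's
  gfinal :: "'s set"

inductive greach :: "('s, 'p, 'v) gproto \<Rightarrow> 's \<Rightarrow> ('p, 'v) msg list \<Rightarrow> 's \<Rightarrow> bool"
  for S where
  greach_nil: "greach S s [] s"
| greach_step: "(s, l, s') \<in> gtrans S \<Longrightarrow> greach S s' w s'' \<Longrightarrow> greach S s (l # w) s''"

definition sink_final :: "('s, 'p, 'v) gproto \<Rightarrow> bool" where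
  "sink_final S = (\<forall>s\<in>gfinal S. \<forall>l s'. (s, l, s') \<notin> gtrans S)"

definition sender_driven :: "('s, 'p, 'v) gproto \<Rightarrow> bool" where
  "sender_driven S =
     (\<forall>s l1 s1 l2 s2. (s, l1, s1) \<in> gtrans S \<and> (s, l2, s2) \<in> gtrans S \<longrightarrow>
        sender l1 = sender l2 \<and> (l1 = l2 \<longrightarrow> s1 = s2))"

definition g_deadlock_free :: "('s, 'p, 'v) gproto \<Rightarrow> bool" where
  "g_deadlock_free S =
     (\<forall>w s. greach S (ginit S) w s \<longrightarrow> s \<in> gfinal S \<or> (\<exists>l s'. (s, l, s') \<in> gtrans S))"

definition global_protocol :: "('s, 'p, 'v) gproto \<Rightarrow> bool" where
  "global_protocol S = (sink_final S \<and> sender_driven S \<and> g_deadlock_free S)"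

definition glang :: "('s, 'p, 'v) gproto \<Rightarrow> ('p, 'v) msg word set" where
  "glang S =
     {Fin w |w. \<exists>s\<in>gfinal S. greach S (ginit S) w s}
   \<union> {Inf g |g. \<exists>\<sigma>. \<sigma> 0 = ginit S \<and> (\<forall>n. (\<sigma> n, g n, \<sigma> (Suc n)) \<in> gtrans S)}"

definition sem :: "('p, 'v, 'c, 'b) arch \<Rightarrow> ('s, 'p, 'v) gproto \<Rightarrow> ('p, 'v) act word set" where
  "sem A S =
     (eq_closure {w \<in> split_word ` glang S. is_fin w} \<inter> arch_lang A)
   \<union> {w. is_inf w \<and>
          (\<forall>u. fprefix u w \<longrightarrow> u \<in> pref (eq_closure (split_word ` glang S) \<inter> arch_lang A))}"

(* implementability; local states of the CLTS are taken to be finite words over \<Sigma>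
   (w.l.o.g.: every deterministic LTS can be unfolded into one with such states) *)
definition implementable :: "('p, 'v, 'c, 'b) arch \<Rightarrow> ('s, 'p, 'v) gproto \<Rightarrow> bool" where
  "implementable A S =
     (\<exists>T :: (('p, 'v) act list, 'p, 'v) clts.
        clts_wf T \<and> clts_deadlock_free A T \<and> clts_lang A T = sem A S)"

end

(*
  Under each of the three architectures the channel contents after a compliant trace are
  determined by the trace, and a reception of m from p is possible iff it extends the received
  messages to a prefix of the sent ones: per sender under sb, per sender and receiver under p2p,
  and up to multiplicity under bag. Hence sb-compliance implies p2p-compliance implies
  bag-compliance, with the same traces ending in empty channels, and a CLTS behaves under the
  finer architecture as under the coarser one restricted to the finer compliant traces.

  With finitely many participants, every finite prefix u of a word equivalent to split g is, in
  the view of each participant, a prefix of split h for a finite prefix h of g. If u is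
  bag-compliant it is already p2p-compliant: the sends from p to q and the receptions of q from p
  are both prefixes of the p-to-q messages of h, so a message present in the bag is also at the
  head of the FIFO channel. Hence the bag and p2p semantics of a protocol coincide. If u is
  sb-compliant, replaying split h completes u to an sb-compliant word with the projections of
  split h, after which the rest of split g can follow; so every sb-compliant prefix of a word of
  the p2p semantics extends to a word of the sb semantics. Deadlock freedom transfers because a
  reachable trace of a deadlock-free CLTS extends to a maximal one, which lies in the semantics
  and therefore continues under the finer architecture.
*)

theory Submission
  imports Defs "HOL-Library.Sublist"
begin

subsection \<open>Messages sent and received along a trace\<close>

abbreviation lproj :: "'p \<Rightarrow> ('p, 'v) act list \<Rightarrow> ('p, 'v) act list" where
  "lproj r u \<equiv> filter (\<lambda>a. a \<in> Sigma_p r) u"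

lemma in_Sigma_p_iff: "a \<in> Sigma_p r \<longleftrightarrow> actor a = r"
  by (simp add: Sigma_p_def)

lemma Snd_Rcv_in_Sigma_p [simp]:
  "Snd p q m \<in> Sigma_p r \<longleftrightarrow> p = r" "Rcv p q m \<in> Sigma_p r \<longleftrightarrow> q = r"
  by (auto simp: Sigma_p_def)

lemma lproj_snoc_actor: "lproj (actor e) (xs @ [e]) = lproj (actor e) xs @ [e]"
  by (simp add: in_Sigma_p_iff)

lemma lproj_snoc_other: "actor e \<noteq> r \<Longrightarrow> lproj r (xs @ [e]) = lproj r xs"
  by (simp add: in_Sigma_p_iff)

fun is_snd :: "('p, 'v) act \<Rightarrow> bool" where
  "is_snd (Snd p q m) = True"
| "is_snd (Rcv p q m) = False"

definition sends :: "('p, 'v) act list \<Rightarrow> ('p \<times> 'p \<times> 'v) list" where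
  "sends w = map act_msg (filter is_snd w)"

definition rcvs :: "('p, 'v) act list \<Rightarrow> ('p \<times> 'p \<times> 'v) list" where
  "rcvs w = map act_msg (filter (Not \<circ> is_snd) w)"

text \<open>Messages are triples (sender, receiver, value). Both sent_from p and rcvd_from p
  concern the messages whose sender is p: those sent, and those received by their receivers.\<close>

definition sent_from :: "'p \<Rightarrow> ('p, 'v) act list \<Rightarrow> ('p \<times> 'p \<times> 'v) list" where
  "sent_from p w = filter (\<lambda>\<mu>. fst \<mu> = p) (sends w)"

definition rcvd_from :: "'p \<Rightarrow> ('p, 'v) act list \<Rightarrow> ('p \<times> 'p \<times> 'v) list" where
  "rcvd_from p w = filter (\<lambda>\<mu>. fst \<mu> = p) (rcvs w)"

definition sent_on :: "'p \<Rightarrow> 'p \<Rightarrow> ('p, 'v) act list \<Rightarrow> ('p \<times> 'p \<times> 'v) list" where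
  "sent_on p q w = filter (\<lambda>\<mu>. fst (snd \<mu>) = q) (sent_from p w)"

definition rcvd_on :: "'p \<Rightarrow> 'p \<Rightarrow> ('p, 'v) act list \<Rightarrow> ('p \<times> 'p \<times> 'v) list" where
  "rcvd_on p q w = filter (\<lambda>\<mu>. fst (snd \<mu>) = q) (rcvd_from p w)"

lemma sends_simps [simp]:
  "sends [] = []" "sends (xs @ ys) = sends xs @ sends ys"
  "sends (Snd p q m # w) = (p, q, m) # sends w" "sends (Rcv p q m # w) = sends w"
  by (auto simp: sends_def)

lemma rcvs_simps [simp]:
  "rcvs [] = []" "rcvs (xs @ ys) = rcvs xs @ rcvs ys"
  "rcvs (Snd p q m # w) = rcvs w" "rcvs (Rcv p q m # w) = (p, q, m) # rcvs w"
  by (auto simp: rcvs_def)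

lemma sent_rcvd_simps [simp]:
  "sent_from p [] = []" "sent_from p (xs @ ys) = sent_from p xs @ sent_from p ys"
  "rcvd_from p [] = []" "rcvd_from p (xs @ ys) = rcvd_from p xs @ rcvd_from p ys"
  "sent_on p q [] = []" "sent_on p q (xs @ ys) = sent_on p q xs @ sent_on p q ys"
  "rcvd_on p q [] = []" "rcvd_on p q (xs @ ys) = rcvd_on p q xs @ rcvd_on p q ys"
  by (auto simp: sent_from_def rcvd_from_def sent_on_def rcvd_on_def)

lemma sent_rcvd_singleton [simp]:
  "sent_from p [Snd a b c] = (if a = p then [(a, b, c)] else [])" "sent_from p [Rcv a b c] = []"
  "rcvd_from p [Rcv a b c] = (if a = p then [(a, b, c)] else [])" "rcvd_from p [Snd a b c] = []"
  "sent_on p q [Snd a b c] = (if a = p \<and> b = q then [(a, b, c)] else [])" "sent_on p q [Rcv a b c] = []"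
  "rcvd_on p q [Rcv a b c] = (if a = p \<and> b = q then [(a, b, c)] else [])" "rcvd_on p q [Snd a b c] = []"
  by (auto simp: sent_from_def rcvd_from_def sent_on_def rcvd_on_def)

lemma sent_rcvd_mono:
  assumes "prefix x y"
  shows "prefix (sent_from p x) (sent_from p y)" "prefix (rcvd_from p x) (rcvd_from p y)"
    "prefix (sent_on p q x) (sent_on p q y)" "prefix (rcvd_on p q x) (rcvd_on p q y)"
  using assms by (auto simp: prefix_def)

lemma sent_from_lproj: "sent_from p (lproj p w) = sent_from p w"
proof (induction w)
  case (Cons a w) then show ?case by (cases a) (auto simp: sent_from_def)
qed simp

lemma sent_on_lproj: "sent_on p q (lproj p w) = sent_on p q w"
  by (simp add: sent_on_def sent_from_lproj)

lemma rcvd_on_lproj: "rcvd_on p q (lproj q w) = rcvd_on p q w"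
proof (induction w)
  case (Cons a w) then show ?case by (cases a) (auto simp: rcvd_on_def rcvd_from_def)
qed simp

lemma count_rcvs: "count (mset (rcvs w)) (p, q, m) = count (mset (rcvd_on p q w)) (p, q, m)"
  by (simp add: rcvd_on_def rcvd_from_def mset_filter)

lemma count_sends: "count (mset (sends w)) (p, q, m) = count (mset (sent_on p q w)) (p, q, m)"
  by (simp add: sent_on_def sent_from_def mset_filter)

lemma in_sent_on: "\<mu> \<in> set (sent_on p q w) \<Longrightarrow> \<exists>m. \<mu> = (p, q, m)"
  by (cases \<mu>) (auto simp: sent_on_def sent_from_def)

definition split_list :: "('p, 'v) msg list \<Rightarrow> ('p, 'v) act list" where
  "split_list l = concat (map split_msg l)"

lemma split_list_simps [simp]:
  "split_list [] = []" "split_list (xs @ ys) = split_list xs @ split_list ys"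
  "split_list (Msg p q m # l) = Snd p q m # Rcv p q m # split_list l"
  by (auto simp: split_list_def)

lemma length_split_list [simp]: "length (split_list l) = 2 * length l"
proof (induction l)
  case (Cons x l) then show ?case by (cases x) auto
qed simp

lemma split_list_mono: "prefix a b \<Longrightarrow> prefix (split_list a) (split_list b)"
  by (auto simp: prefix_def)

lemma rcvs_split_list: "rcvs (split_list l) = sends (split_list l)"
proof (induction l)
  case (Cons x l) then show ?case by (cases x) auto
qed simp

lemma rcvd_on_split_list: "rcvd_on p q (split_list l) = sent_on p q (split_list l)"
  by (simp add: sent_on_def rcvd_on_def sent_from_def rcvd_from_def rcvs_split_list)

lemma rcvd_from_split_list: "rcvd_from p (split_list l) = sent_from p (split_list l)"
  by (simp add: sent_from_def rcvd_from_def rcvs_split_list)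

subsection \<open>Channel contents as functions of the trace\<close>

lemma ch_run_append:
  "ch_run A \<chi> (xs @ ys) = (case ch_run A \<chi> xs of None \<Rightarrow> None | Some \<chi>' \<Rightarrow> ch_run A \<chi>' ys)"
  by (induction xs arbitrary: \<chi>) (auto split: option.split)

lemma compliant_append_left: "compliant A (xs @ ys) \<Longrightarrow> compliant A xs"
  by (auto simp: compliant_def ch_run_append split: option.splits)

lemma compliant_prefix: "compliant A ys \<Longrightarrow> prefix xs ys \<Longrightarrow> compliant A xs"
  by (auto simp: prefix_def intro: compliant_append_left)

abbreviation ends_empty :: "('p, 'v, 'c, 'b) arch \<Rightarrow> ('p, 'v) act list \<Rightarrow> bool" where
  "ends_empty A w \<equiv> ch_run A (chi0 A) w = Some (chi0 A)"

locale channel_abstraction =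
  fixes A :: "('p, 'v, 'c, 'b) arch"
    and state :: "('p, 'v) act list \<Rightarrow> 'c \<Rightarrow> 'b"
    and enabled :: "('p, 'v) act list \<Rightarrow> ('p, 'v) act \<Rightarrow> bool"
    and invar :: "('p, 'v) act list \<Rightarrow> bool"
  assumes state_Nil: "state [] = chi0 A"
    and invar_Nil: "invar []"
    and ch_step_state:
      "invar w \<Longrightarrow> ch_step A (state w) a = (if enabled w a then Some (state (w @ [a])) else None)"
    and invar_snoc: "invar w \<Longrightarrow> enabled w a \<Longrightarrow> invar (w @ [a])"
begin

lemma compliant_state:
  "compliant A w \<Longrightarrow> ch_run A (chi0 A) w = Some (state w) \<and> invar w"
proof (induction w rule: rev_induct)
  case Nil
  then show ?case by (simp add: state_Nil invar_Nil)
next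
  case (snoc a w)
  then have IH: "ch_run A (chi0 A) w = Some (state w)" "invar w"
    using compliant_append_left by blast+
  then have "ch_run A (chi0 A) (w @ [a]) = ch_step A (state w) a"
    by (simp add: ch_run_append split: option.split)
  then show ?case
    using snoc.prems ch_step_state[OF IH(2), of a] invar_snoc[OF IH(2), of a]
    by (auto simp: compliant_def split: if_splits)
qed

lemma compliant_snoc_iff: "compliant A (w @ [a]) \<longleftrightarrow> compliant A w \<and> enabled w a"
proof (cases "compliant A w")
  case True
  then have "ch_run A (chi0 A) (w @ [a]) = ch_step A (state w) a" "invar w"
    using compliant_state by (auto simp: ch_run_append split: option.split)
  then show ?thesis
    using True ch_step_state by (simp add: compliant_def)
qed (use compliant_append_left in blast)

lemma ends_empty_iff: "compliant A w \<Longrightarrow> ends_empty A w \<longleftrightarrow> state w = chi0 A"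
  using compliant_state by simp

end

lemma fifo_remove_drop:
  assumes "prefix R S"
  shows "fifo_remove \<mu> (drop (length R) S) =
    (if prefix (R @ [\<mu>]) S then Some (drop (Suc (length R)) S) else None)"
proof -
  obtain T where "S = R @ T" using assms prefix_def by blast
  then show ?thesis by (cases T) auto
qed

lemma strict_prefix_snoc_ex: "strict_prefix xs ys \<Longrightarrow> \<exists>y. prefix (xs @ [y]) ys"
  by (auto elim!: strict_prefixE')

lemma prefix_eq_if_length_le: "prefix xs ys \<Longrightarrow> length ys \<le> length xs \<Longrightarrow> xs = ys"
  by (auto simp: prefix_def)

definition sb_state :: "('p, 'v) act list \<Rightarrow> 'p \<Rightarrow> ('p \<times> 'p \<times> 'v) list" where
  "sb_state w = (\<lambda>p. drop (length (rcvd_from p w)) (sent_from p w))"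

definition sb_enabled :: "('p, 'v) act list \<Rightarrow> ('p, 'v) act \<Rightarrow> bool" where
  "sb_enabled w a \<longleftrightarrow> (\<forall>p q m. a = Rcv p q m \<longrightarrow> prefix (rcvd_from p w @ [(p, q, m)]) (sent_from p w))"

interpretation sb_chan: channel_abstraction sb sb_state sb_enabled
  "\<lambda>w. \<forall>p. prefix (rcvd_from p w) (sent_from p w)"
proof
  fix w :: "('p, 'v) act list" and a
  assume inv: "\<forall>p. prefix (rcvd_from p w) (sent_from p w)"
  show "ch_step sb (sb_state w) a = (if sb_enabled w a then Some (sb_state (w @ [a])) else None)"
  proof (cases a)
    case (Snd p q m)
    have "length (rcvd_from p w) \<le> length (sent_from p w)" using inv prefix_length_le by blast
    then show ?thesis
      using Snd by (auto simp: sb_def fifo_insert_def sb_state_def sb_enabled_def fun_eq_iff)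
  next
    case (Rcv p q m)
    then show ?thesis
      using inv fifo_remove_drop[of "rcvd_from p w" "sent_from p w" "(p, q, m)"]
      by (auto simp: sb_def sb_state_def sb_enabled_def fun_eq_iff)
  qed
  show "sb_enabled w a \<Longrightarrow> \<forall>p. prefix (rcvd_from p (w @ [a])) (sent_from p (w @ [a]))"
    using inv by (cases a) (auto simp: sb_enabled_def intro: prefix_order.trans)
qed (auto simp: sb_state_def sb_def chi0_def)

lemma sb_ends_empty_iff:
  assumes "compliant sb w"
  shows "ends_empty sb w \<longleftrightarrow> (\<forall>p. rcvd_from p w = sent_from p w)"
proof -
  have "sb_state w = chi0 sb \<longleftrightarrow> (\<forall>p. rcvd_from p w = sent_from p w)"
    using sb_chan.compliant_state[OF assms]
    by (auto simp: sb_state_def chi0_def sb_def fun_eq_iff prefix_length_le prefix_eq_if_length_le)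
  then show ?thesis using sb_chan.ends_empty_iff[OF assms] by simp
qed

definition p2p_state :: "('p, 'v) act list \<Rightarrow> 'p \<times> 'p \<Rightarrow> ('p \<times> 'p \<times> 'v) list" where
  "p2p_state w = (\<lambda>(p, q). drop (length (rcvd_on p q w)) (sent_on p q w))"

definition p2p_enabled :: "('p, 'v) act list \<Rightarrow> ('p, 'v) act \<Rightarrow> bool" where
  "p2p_enabled w a \<longleftrightarrow> (\<forall>p q m. a = Rcv p q m \<longrightarrow> prefix (rcvd_on p q w @ [(p, q, m)]) (sent_on p q w))"

interpretation p2p_chan: channel_abstraction p2p p2p_state p2p_enabled
  "\<lambda>w. \<forall>p q. prefix (rcvd_on p q w) (sent_on p q w)"
proof
  fix w :: "('p, 'v) act list" and a
  assume inv: "\<forall>p q. prefix (rcvd_on p q w) (sent_on p q w)"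
  show "ch_step p2p (p2p_state w) a = (if p2p_enabled w a then Some (p2p_state (w @ [a])) else None)"
  proof (cases a)
    case (Snd p q m)
    have "length (rcvd_on p q w) \<le> length (sent_on p q w)" using inv prefix_length_le by blast
    then show ?thesis
      using Snd by (auto simp: p2p_def fifo_insert_def p2p_state_def p2p_enabled_def fun_eq_iff)
  next
    case (Rcv p q m)
    then show ?thesis
      using inv fifo_remove_drop[of "rcvd_on p q w" "sent_on p q w" "(p, q, m)"]
      by (auto simp: p2p_def p2p_state_def p2p_enabled_def fun_eq_iff)
  qed
  show "p2p_enabled w a \<Longrightarrow> \<forall>p q. prefix (rcvd_on p q (w @ [a])) (sent_on p q (w @ [a]))"
    using inv by (cases a) (auto simp: p2p_enabled_def intro: prefix_order.trans)
qed (auto simp: p2p_state_def p2p_def chi0_def)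

lemma p2p_ends_empty_iff:
  assumes "compliant p2p w"
  shows "ends_empty p2p w \<longleftrightarrow> (\<forall>p q. rcvd_on p q w = sent_on p q w)"
proof -
  have "p2p_state w = chi0 p2p \<longleftrightarrow> (\<forall>p q. rcvd_on p q w = sent_on p q w)"
    using p2p_chan.compliant_state[OF assms]
    by (auto simp: p2p_state_def chi0_def p2p_def fun_eq_iff prefix_length_le prefix_eq_if_length_le)
  then show ?thesis using p2p_chan.ends_empty_iff[OF assms] by simp
qed

definition bag_state :: "('p, 'v) act list \<Rightarrow> unit \<Rightarrow> ('p \<times> 'p \<times> 'v) multiset" where
  "bag_state w = (\<lambda>_. mset (sends w) - mset (rcvs w))"

definition bag_enabled :: "('p, 'v) act list \<Rightarrow> ('p, 'v) act \<Rightarrow> bool" where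
  "bag_enabled w a \<longleftrightarrow>
     (\<forall>p q m. a = Rcv p q m \<longrightarrow> count (mset (rcvs w)) (p, q, m) < count (mset (sends w)) (p, q, m))"

interpretation bag_chan: channel_abstraction bag bag_state bag_enabled
  "\<lambda>w. mset (rcvs w) \<subseteq># mset (sends w)"
proof
  fix w :: "('p, 'v) act list" and a
  assume inv: "mset (rcvs w) \<subseteq># mset (sends w)"
  show "ch_step bag (bag_state w) a = (if bag_enabled w a then Some (bag_state (w @ [a])) else None)"
    using inv by (cases a)
      (auto simp: bag_def bag_insert_def bag_remove_def bag_state_def bag_enabled_def fun_eq_iff
        multiset_eq_iff subseteq_mset_def Suc_diff_le in_diff_count)
  show "bag_enabled w a \<Longrightarrow> mset (rcvs (w @ [a])) \<subseteq># mset (sends (w @ [a]))"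
    using inv by (cases a) (auto simp: bag_enabled_def subseteq_mset_def le_Suc_eq Suc_le_eq)
qed (auto simp: bag_state_def bag_def chi0_def)

lemma bag_ends_empty_iff:
  assumes "compliant bag w"
  shows "ends_empty bag w \<longleftrightarrow> mset (rcvs w) = mset (sends w)"
proof -
  have "bag_state w = chi0 bag \<longleftrightarrow> mset (rcvs w) = mset (sends w)"
    using bag_chan.compliant_state[OF assms]
    by (auto simp: bag_state_def chi0_def bag_def fun_eq_iff subset_mset.antisym Diff_eq_empty_iff_mset)
  then show ?thesis using bag_chan.ends_empty_iff[OF assms] by simp
qed

subsection \<open>Refinement between architectures\<close>

definition arch_refines :: "('p, 'v, 'c, 'b) arch \<Rightarrow> ('p, 'v, 'd, 'e) arch \<Rightarrow> bool" where
  "arch_refines B A \<longleftrightarrow>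
     (\<forall>w. compliant B w \<longrightarrow> compliant A w \<and> (ends_empty B w \<longleftrightarrow> ends_empty A w))"

lemma prefix_eq_by_filters:
  assumes "prefix R S" "\<forall>k. filter (\<lambda>x. f x = k) R = filter (\<lambda>x. f x = k) S"
  shows "R = S"
proof (rule ccontr)
  assume "R \<noteq> S"
  then obtain y T where "S = R @ y # T"
    using assms(1) by (metis append_Nil2 neq_Nil_conv prefix_def)
  then show False using assms(2)[rule_format, of "f y"] by simp
qed

lemma compliant_sb_imp_p2p: "compliant sb w \<Longrightarrow> compliant p2p w"
proof (induction w rule: rev_induct)
  case Nil
  then show ?case by (simp add: compliant_def)
next
  case (snoc a w)
  then have "compliant sb w" "sb_enabled w a" using sb_chan.compliant_snoc_iff by blast+
  moreover have "p2p_enabled w a"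
    unfolding p2p_enabled_def
  proof (intro allI impI)
    fix p q m
    assume "a = Rcv p q m"
    then have "prefix (rcvd_from p w @ [(p, q, m)]) (sent_from p w)"
      using \<open>sb_enabled w a\<close> by (simp add: sb_enabled_def)
    from filter_mono_prefix[OF this, of "\<lambda>\<mu>. fst (snd \<mu>) = q"]
    show "prefix (rcvd_on p q w @ [(p, q, m)]) (sent_on p q w)"
      by (simp add: rcvd_on_def sent_on_def)
  qed
  ultimately show ?case using snoc.IH p2p_chan.compliant_snoc_iff by blast
qed

lemma sb_refines_p2p: "arch_refines sb p2p"
  unfolding arch_refines_def
proof (intro allI impI conjI)
  fix w :: "('p, 'v) act list"
  assume c: "compliant sb w"
  then show "compliant p2p w" by (rule compliant_sb_imp_p2p)
  have "(\<forall>p. rcvd_from p w = sent_from p w) \<longleftrightarrow> (\<forall>p q. rcvd_on p q w = sent_on p q w)"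
    using prefix_eq_by_filters[of "rcvd_from p w" "sent_from p w" "\<lambda>\<mu>. fst (snd \<mu>)" for p]
      sb_chan.compliant_state[OF c]
    by (auto simp: rcvd_on_def sent_on_def)
  then show "ends_empty sb w \<longleftrightarrow> ends_empty p2p w"
    using sb_ends_empty_iff[OF c] p2p_ends_empty_iff[OF \<open>compliant p2p w\<close>] by simp
qed

lemma count_lt_if_prefix_snoc: "prefix (x @ [a]) y \<Longrightarrow> count (mset x) a < count (mset y) a"
  by (auto simp: prefix_def)

lemma count_le_if_prefix: "prefix x y \<Longrightarrow> count (mset x) a \<le> count (mset y) a"
  by (auto simp: prefix_def)

lemma compliant_p2p_imp_bag: "compliant p2p w \<Longrightarrow> compliant bag w"
proof (induction w rule: rev_induct)
  case Nil
  then show ?case by (simp add: compliant_def)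
next
  case (snoc a w)
  then have "compliant p2p w" "p2p_enabled w a" using p2p_chan.compliant_snoc_iff by blast+
  moreover have "bag_enabled w a" using \<open>p2p_enabled w a\<close>
    by (auto simp: p2p_enabled_def bag_enabled_def count_rcvs count_sends
        intro: count_lt_if_prefix_snoc)
  ultimately show ?case using snoc.IH bag_chan.compliant_snoc_iff by blast
qed

lemma p2p_refines_bag: "arch_refines p2p bag"
  unfolding arch_refines_def
proof (intro allI impI conjI)
  fix w :: "('p, 'v) act list"
  assume c: "compliant p2p w"
  then show "compliant bag w" by (rule compliant_p2p_imp_bag)
  have "(\<forall>p q. rcvd_on p q w = sent_on p q w) \<longleftrightarrow> mset (rcvs w) = mset (sends w)"
  proof
    assume "\<forall>p q. rcvd_on p q w = sent_on p q w"
    then show "mset (rcvs w) = mset (sends w)"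
      by (auto simp: multiset_eq_iff count_rcvs count_sends)
  next
    assume eq: "mset (rcvs w) = mset (sends w)"
    show "\<forall>p q. rcvd_on p q w = sent_on p q w"
    proof (intro allI, rule ccontr)
      fix p q
      assume ne: "rcvd_on p q w \<noteq> sent_on p q w"
      have "prefix (rcvd_on p q w) (sent_on p q w)" using p2p_chan.compliant_state[OF c] by blast
      then have "strict_prefix (rcvd_on p q w) (sent_on p q w)" using ne by (rule strict_prefixI)
      then obtain y where y: "prefix (rcvd_on p q w @ [y]) (sent_on p q w)"
        using strict_prefix_snoc_ex by blast
      then have "y \<in> set (sent_on p q w)" using set_mono_prefix by fastforce
      then obtain m where "y = (p, q, m)" using in_sent_on by metis
      then show False
        using count_lt_if_prefix_snoc[OF y] eq count_rcvs[of w p q m] count_sends[of w p q m] by simp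
    qed
  qed
  then show "ends_empty p2p w \<longleftrightarrow> ends_empty bag w"
    using p2p_ends_empty_iff[OF c] bag_ends_empty_iff[OF \<open>compliant bag w\<close>] by simp
qed

subsection \<open>Words locally below a split word\<close>

abbreviation local_prefix :: "('p, 'v) act list \<Rightarrow> ('p, 'v) act list \<Rightarrow> bool" where
  "local_prefix u v \<equiv> \<forall>r. prefix (lproj r u) (lproj r v)"

lemma local_prefix_append_left: "local_prefix (v @ w) x \<Longrightarrow> local_prefix v x"
  by (metis filter_append prefix_order.trans prefixI)

text \<open>The sends from p to q in v and the receptions of q from p in v are both prefixes of the
  messages from p to q in h, hence comparable; so a reception that the bag allows is already the
  next one in FIFO order.\<close>

lemma p2p_enabled_if_bag_enabled:
  assumes "bag_enabled v a" "local_prefix (v @ [a]) (split_list h)"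
  shows "p2p_enabled v a"
  unfolding p2p_enabled_def
proof (intro allI impI)
  fix p q m
  assume a: "a = Rcv p q m"
  let ?H = "sent_on p q (split_list h)"
  have fewer: "count (mset (rcvd_on p q v)) (p, q, m) < count (mset (sent_on p q v)) (p, q, m)"
    using assms(1) a by (simp add: bag_enabled_def count_rcvs count_sends)
  have "prefix (rcvd_on p q (lproj q (v @ [a]))) (rcvd_on p q (lproj q (split_list h)))"
    using assms(2) by (intro sent_rcvd_mono(4)) blast
  then have rcvd: "prefix (rcvd_on p q v @ [(p, q, m)]) ?H"
    using a by (simp add: rcvd_on_lproj rcvd_on_split_list)
  have "prefix (sent_on p q (lproj p v)) (sent_on p q (lproj p (split_list h)))"
    using local_prefix_append_left[OF assms(2)] by (intro sent_rcvd_mono(3)) blast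
  then have sent: "prefix (sent_on p q v) ?H" by (simp add: sent_on_lproj)
  show "prefix (rcvd_on p q v @ [(p, q, m)]) (sent_on p q v)"
  proof (rule ccontr)
    assume "\<not> ?thesis"
    then have "prefix (sent_on p q v) (rcvd_on p q v)"
      using prefix_same_cases[OF rcvd sent] by (auto simp: prefix_snoc)
    then show False
      using fewer count_le_if_prefix[of "sent_on p q v" "rcvd_on p q v" "(p, q, m)"] by simp
  qed
qed

lemma compliant_p2p_if_bag_local_prefix_split:
  assumes "compliant bag v" "local_prefix v (split_list h)"
  shows "compliant p2p v"
  using assms
proof (induction v rule: rev_induct)
  case Nil
  then show ?case by (simp add: compliant_def)
next
  case (snoc a v)
  have "compliant bag v" "bag_enabled v a"
    using snoc.prems(1) bag_chan.compliant_snoc_iff by blast+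
  then have "compliant p2p v" "p2p_enabled v a"
    using snoc.IH local_prefix_append_left[OF snoc.prems(2)] p2p_enabled_if_bag_enabled snoc.prems(2)
    by blast+
  then show ?case using p2p_chan.compliant_snoc_iff by blast
qed

lemma split_list_eq_RcvE:
  assumes "split_list h = t @ Rcv p q m # rest"
  obtains h1 where "t = split_list h1 @ [Snd p q m]"
  using assms
proof (induction h arbitrary: t thesis)
  case Nil
  then show ?case by simp
next
  case (Cons x h)
  obtain a b c where x: "x = Msg a b c" by (cases x)
  show ?case
  proof (cases t)
    case Nil
    then show ?thesis using Cons.prems x by simp
  next
    case tC: (Cons y t1)
    show ?thesis
    proof (cases t1)
      case Nil
      then show ?thesis using Cons.prems x tC by (intro Cons.prems(1)[of "[]"]) auto
    next
      case t1C: (Cons z t2)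
      then have "split_list h = t2 @ Rcv p q m # rest" using Cons.prems x tC by simp
      then obtain h1 where "t2 = split_list h1 @ [Snd p q m]" using Cons.IH by blast
      then show ?thesis using Cons.prems x tC t1C by (intro Cons.prems(1)[of "x # h1"]) auto
    qed
  qed
qed

lemma prefix_snoc_unique: "prefix (xs @ [a]) S \<Longrightarrow> prefix (xs @ [b]) S \<Longrightarrow> a = b"
  using prefix_same_cases by fastforce

lemma prefix_between_snoc:
  assumes "prefix x y" "prefix y (x @ e # z)" "\<not> prefix (x @ [e]) y"
  shows "y = x"
proof -
  obtain y' where y: "y = x @ y'" using assms(1) prefix_def by blast
  then have "prefix y' (e # z)" using assms(2) by simp
  then show ?thesis using assms(3) y by (cases y') auto
qed

lemma prefix_snoc_by_class_filters:
  assumes next_\<mu>: "prefix (Pi @ [\<mu>]) S" and "prefix R S"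
    and dominated: "\<forall>k. prefix (filter (\<lambda>x. f x = k) Pi) (filter (\<lambda>x. f x = k) R)"
    and same_class: "filter (\<lambda>x. f x = f \<mu>) R = filter (\<lambda>x. f x = f \<mu>) Pi"
  shows "prefix (R @ [\<mu>]) S"
proof -
  have "prefix Pi S" using next_\<mu> by (simp add: append_prefixD)
  have "R = Pi"
  proof (rule ccontr)
    assume ne: "R \<noteq> Pi"
    from prefix_same_cases[OF \<open>prefix Pi S\<close> \<open>prefix R S\<close>] show False
    proof
      assume "prefix Pi R"
      then obtain y where y: "prefix (Pi @ [y]) R"
        using ne strict_prefixI strict_prefix_snoc_ex by metis
      then have "y = \<mu>"
        using \<open>prefix R S\<close> next_\<mu> prefix_snoc_unique prefix_order.trans by metis
      then have "prefix (filter (\<lambda>x. f x = f \<mu>) Pi @ [\<mu>]) (filter (\<lambda>x. f x = f \<mu>) R)"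
        using filter_mono_prefix[OF y, of "\<lambda>x. f x = f \<mu>"] by simp
      then show False using same_class prefix_length_le by fastforce
    next
      assume "prefix R Pi"
      then obtain y where y: "prefix (R @ [y]) Pi"
        using ne strict_prefixI strict_prefix_snoc_ex by metis
      have "prefix (filter (\<lambda>x. f x = f y) R @ [y]) (filter (\<lambda>x. f x = f y) Pi)"
        using filter_mono_prefix[OF y, of "\<lambda>x. f x = f y"] by simp
      also have "prefix \<dots> (filter (\<lambda>x. f x = f y) R)" using dominated by blast
      finally show False using prefix_length_le by fastforce
    qed
  qed
  then show ?thesis using next_\<mu> by simp
qed

text \<open>Let Pi be the sends of p preceding the send of e in split h. The receptions from p in v
  dominate Pi receiver by receiver and coincide with it at the receiver of e, so they are exactly
  Pi, and the message of e is next in the buffer of p.\<close>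

lemma sb_enabled_next_of_split:
  assumes split: "split_list h = t @ e # rest" and "compliant sb v" and "local_prefix t v"
    and same_view: "lproj (actor e) v = lproj (actor e) t"
  shows "sb_enabled v e"
  unfolding sb_enabled_def
proof (intro allI impI)
  fix p q m
  assume e: "e = Rcv p q m"
  then obtain h1 where t: "t = split_list h1 @ [Snd p q m]"
    using split split_list_eq_RcvE by metis
  define Pi where "Pi = sent_from p (split_list h1)"
  have "prefix (sent_from p (lproj p t)) (sent_from p (lproj p v))"
    using \<open>local_prefix t v\<close> by (intro sent_rcvd_mono(1)) blast
  then have next_\<mu>: "prefix (Pi @ [(p, q, m)]) (sent_from p v)"
    by (simp add: sent_from_lproj Pi_def t)
  have "prefix (rcvd_from p v) (sent_from p v)"
    using sb_chan.compliant_state[OF \<open>compliant sb v\<close>] by blast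
  moreover have filter_Pi: "filter (\<lambda>\<mu>. fst (snd \<mu>) = k) Pi = rcvd_on p k (lproj k t)" for k
    unfolding rcvd_on_lproj by (simp add: Pi_def t rcvd_on_def rcvd_from_split_list)
  have filter_rcvd: "filter (\<lambda>\<mu>. fst (snd \<mu>) = k) (rcvd_from p v) = rcvd_on p k (lproj k v)" for k
    unfolding rcvd_on_lproj by (simp add: rcvd_on_def)
  have "\<forall>k. prefix (filter (\<lambda>\<mu>. fst (snd \<mu>) = k) Pi) (filter (\<lambda>\<mu>. fst (snd \<mu>) = k) (rcvd_from p v))"
    unfolding filter_Pi filter_rcvd using \<open>local_prefix t v\<close> by (blast intro: sent_rcvd_mono(4))
  moreover have "filter (\<lambda>\<mu>. fst (snd \<mu>) = q) (rcvd_from p v) = filter (\<lambda>\<mu>. fst (snd \<mu>) = q) Pi"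
    unfolding filter_Pi filter_rcvd using same_view e by simp
  ultimately show "prefix (rcvd_from p v @ [(p, q, m)]) (sent_from p v)"
    using prefix_snoc_by_class_filters[OF next_\<mu>, where f = "\<lambda>\<mu>. fst (snd \<mu>)"] by simp
qed

lemma lproj_actor_eq_if_not_local_prefix_snoc:
  assumes "local_prefix t v" "local_prefix v (t @ e # rest)" "\<not> local_prefix (t @ [e]) v"
  shows "lproj (actor e) v = lproj (actor e) t"
proof -
  let ?r = "actor e"
  obtain r0 where r0: "\<not> prefix (lproj r0 (t @ [e])) (lproj r0 v)" using assms(3) by blast
  have "r0 = ?r"
  proof (rule ccontr)
    assume "r0 \<noteq> ?r"
    then have "lproj r0 (t @ [e]) = lproj r0 t" using lproj_snoc_other by metis
    then show False using r0 assms(1) by simp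
  qed
  then have "\<not> prefix (lproj ?r t @ [e]) (lproj ?r v)"
    using r0 lproj_snoc_actor[of e t] by simp
  moreover have "prefix (lproj ?r v) (lproj ?r t @ e # lproj ?r rest)"
    using assms(2)[rule_format, of ?r] by (simp add: in_Sigma_p_iff)
  moreover have "prefix (lproj ?r t) (lproj ?r v)" using assms(1) by blast
  ultimately show ?thesis by (intro prefix_between_snoc)
qed

lemma local_prefix_snoc_both:
  assumes "local_prefix t v" "local_prefix v (t @ e # rest)"
    and same_view: "lproj (actor e) v = lproj (actor e) t"
  shows "local_prefix (t @ [e]) (v @ [e]) \<and> local_prefix (v @ [e]) (t @ e # rest)"
proof (intro allI conjI)
  fix r
  have "prefix (lproj r t) (lproj r v)" "prefix (lproj r v) (lproj r (t @ e # rest))"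
    using assms(1,2) by blast+
  then show "prefix (lproj r (t @ [e])) (lproj r (v @ [e]))"
    "prefix (lproj r (v @ [e])) (lproj r (t @ e # rest))"
    using same_view lproj_snoc_actor[of e] lproj_snoc_other[of e r]
    by (cases "actor e = r"; simp add: in_Sigma_p_iff)+
qed

text \<open>Replay split h letter by letter: a letter whose actor has already performed it in v is
  skipped, and any other letter can be appended to v.\<close>

lemma sb_completion_along_split:
  assumes "split_list h = t @ rest" "compliant sb v" "local_prefix t v" "local_prefix v (split_list h)"
  shows "\<exists>x. compliant sb (v @ x) \<and> (\<forall>r. lproj r (v @ x) = lproj r (split_list h))"
  using assms
proof (induction rest arbitrary: t v)
  case Nil
  then show ?case by (intro exI[of _ "[]"]) (auto intro: prefix_order.antisym)
next
  case (Cons e rest)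
  have split': "split_list h = (t @ [e]) @ rest" using Cons.prems(1) by simp
  show ?case
  proof (cases "local_prefix (t @ [e]) v")
    case True
    then show ?thesis using Cons.IH[OF split' Cons.prems(2) _ Cons.prems(4)] by blast
  next
    case False
    have same_view: "lproj (actor e) v = lproj (actor e) t"
      using lproj_actor_eq_if_not_local_prefix_snoc[OF Cons.prems(3) _ False] Cons.prems(1,4) by simp
    then have "compliant sb (v @ [e])"
      using sb_enabled_next_of_split[OF Cons.prems(1-3)] sb_chan.compliant_snoc_iff Cons.prems(2)
      by blast
    moreover have "local_prefix (t @ [e]) (v @ [e]) \<and> local_prefix (v @ [e]) (split_list h)"
      using local_prefix_snoc_both[OF Cons.prems(3) _ same_view] Cons.prems(1,4) by simp
    ultimately obtain x where "compliant sb ((v @ [e]) @ x)"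
      "\<forall>r. lproj r ((v @ [e]) @ x) = lproj r (split_list h)"
      using Cons.IH[OF split'] by blast
    then show ?thesis by (intro exI[of _ "e # x"]) simp
  qed
qed

lemma sb_completion_to_split:
  assumes "compliant sb v" "local_prefix v (split_list h)"
  shows "\<exists>x. compliant sb (v @ x) \<and> (\<forall>r. lproj r (v @ x) = lproj r (split_list h))"
  using sb_completion_along_split[of h "[]" "split_list h" v] assms by simp

lemma sb_ends_empty_if_views_split:
  assumes "compliant sb w" "\<forall>r. lproj r w = lproj r (split_list h)"
  shows "ends_empty sb w"
proof -
  have channels_drained: "rcvd_on p q w = sent_on p q w" for p q
  proof -
    have "rcvd_on p q w = rcvd_on p q (lproj q (split_list h))"
      using assms(2) rcvd_on_lproj[of p q w] by simp
    also have "\<dots> = sent_on p q (lproj p (split_list h))"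
      by (simp add: rcvd_on_lproj sent_on_lproj rcvd_on_split_list)
    also have "\<dots> = sent_on p q w"
      using assms(2) sent_on_lproj[of p q w] by simp
    finally show ?thesis .
  qed
  have "compliant p2p w" and "ends_empty sb w \<longleftrightarrow> ends_empty p2p w"
    using sb_refines_p2p assms(1) unfolding arch_refines_def by blast+
  moreover have "ends_empty p2p w"
    using p2p_ends_empty_iff[OF \<open>compliant p2p w\<close>] channels_drained by blast
  ultimately show ?thesis by blast
qed

subsection \<open>Finite prefixes and projections of words\<close>

lemma fprefix_prefix_trans: "prefix v u \<Longrightarrow> fprefix u w \<Longrightarrow> fprefix v w"
proof (cases w)
  case (Fin x)
  assume "prefix v u" "fprefix u w"
  then show ?thesis using Fin by (auto simp: prefix_def)
next
  case (Inf f)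
  assume "prefix v u" "fprefix u w"
  then obtain z where u: "u = v @ z" and "u = map f [0..<length u]"
    using Inf by (auto simp: prefix_def)
  then have "v @ z = map f [0..<length v] @ map f [length v..<length v + length z]"
    by (simp add: upt_add_eq_append[of 0 "length v" "length z"])
  then show ?thesis using Inf by (simp add: append_eq_append_conv)
qed

lemma card_less_enumerate:
  fixes S :: "nat set"
  assumes "infinite S"
  shows "card {i \<in> S. i < enumerate S k} = k"
proof -
  have "{i \<in> S. i < enumerate S k} = enumerate S ` {..<k}"
  proof
    show "{i \<in> S. i < enumerate S k} \<subseteq> enumerate S ` {..<k}"
    proof
      fix i
      assume i: "i \<in> {i \<in> S. i < enumerate S k}"
      then obtain j where "enumerate S j = i" using enumerate_Ex[OF assms] by blast
      moreover have "j < k" using i \<open>enumerate S j = i\<close> assms by auto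
      ultimately show "i \<in> enumerate S ` {..<k}" by auto
    qed
    show "enumerate S ` {..<k} \<subseteq> {i \<in> S. i < enumerate S k}"
      using assms enumerate_in_set by auto
  qed
  moreover have "inj_on (enumerate S) {..<k}"
    using inj_enumerate[OF assms] by (simp add: inj_on_def inj_def)
  ultimately show ?thesis by (simp add: card_image)
qed

lemma filter_map_upt_enumerate:
  assumes "infinite {i. f i \<in> D}"
  shows "filter (\<lambda>a. a \<in> D) (map f [0..<n]) =
    map (\<lambda>k. f (enumerate {i. f i \<in> D} k)) [0..<card {i. f i \<in> D \<and> i < n}]"
proof (induction n)
  case (Suc n)
  show ?case
  proof (cases "f n \<in> D")
    case True
    have "{i. f i \<in> D \<and> i < Suc n} = insert n {i. f i \<in> D \<and> i < n}"
      using True by auto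
    moreover have "enumerate {i. f i \<in> D} (card {i. f i \<in> D \<and> i < n}) = n"
      using card_less_enumerate[OF assms] enumerate_Ex[OF assms, of n] True by fastforce
    ultimately show ?thesis using Suc True by simp
  next
    case False
    then have "{i. f i \<in> D \<and> i < Suc n} = {i. f i \<in> D \<and> i < n}" by (auto simp: less_Suc_eq)
    then show ?thesis using Suc False by simp
  qed
qed simp

lemma finite_hits_Least_bound:
  fixes f :: "nat \<Rightarrow> 'a"
  assumes "finite {i. f i \<in> D}"
  shows "\<forall>i \<ge> (LEAST N. \<forall>i\<ge>N. f i \<notin> D). f i \<notin> D"
proof (rule LeastI_ex)
  show "\<exists>N. \<forall>i\<ge>N. f i \<notin> D"
    using finite_nat_bounded[OF assms] by (auto simp: not_less[symmetric])
qed

lemma filter_map_upt_beyond: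
  assumes "\<forall>i\<ge>L. f i \<notin> D" "L \<le> n"
  shows "filter (\<lambda>a. a \<in> D) (map f [0..<n]) = filter (\<lambda>a. a \<in> D) (map f [0..<L])"
proof -
  have "[0..<n] = [0..<L] @ [L..<n]" using assms(2) upt_add_eq_append[of 0 L "n - L"] by simp
  moreover have "filter (\<lambda>a. a \<in> D) (map f [L..<n]) = []"
    using assms(1) by (auto simp: filter_empty_conv)
  ultimately show ?thesis by simp
qed

lemma fprefix_wproj_filter: "fprefix u w \<Longrightarrow> fprefix (filter (\<lambda>a. a \<in> D) u) (wproj D w)"
proof (cases w)
  case (Inf f)
  assume "fprefix u w"
  then have u: "u = map f [0..<length u]" using Inf by simp
  show ?thesis
  proof (cases "infinite {i. f i \<in> D}")
    case True
    then show ?thesis using Inf filter_map_upt_enumerate[OF True, of "length u"] u by simp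
  next
    case False
    define L where "L = (LEAST N. \<forall>i\<ge>N. f i \<notin> D)"
    have L: "\<forall>i\<ge>L. f i \<notin> D" using finite_hits_Least_bound False unfolding L_def by blast
    have w: "wproj D w = Fin (filter (\<lambda>a. a \<in> D) (map f [0..<L]))" using Inf False L_def by simp
    show ?thesis
    proof (cases "length u \<le> L")
      case True
      then have "[0..<L] = [0..<length u] @ [length u..<L]"
        using upt_add_eq_append[of 0 "length u" "L - length u"] by simp
      then show ?thesis using w u by (metis filter_append fprefix.simps(1) map_append)
    next
      case False
      then show ?thesis
        using w u filter_map_upt_beyond[OF L, of "length u"] by (metis append_Nil2 fprefix.simps(1) nat_le_linear)
    qed
  qed
qed auto

lemma fprefix_wprojE:
  assumes "fprefix v (wproj D w)"
  obtains u where "fprefix u w" "prefix v (filter (\<lambda>a. a \<in> D) u)"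
proof (cases w)
  case (Fin x)
  then show ?thesis using assms that[of x] by (auto simp: prefix_def)
next
  case (Inf f)
  show ?thesis
  proof (cases "infinite {i. f i \<in> D}")
    case True
    let ?S = "{i. f i \<in> D}"
    let ?u = "map f [0..<enumerate ?S (length v)]"
    have "v = map (\<lambda>k. f (enumerate ?S k)) [0..<length v]" using assms Inf True by simp
    also have "\<dots> = filter (\<lambda>a. a \<in> D) ?u"
      using filter_map_upt_enumerate[OF True] card_less_enumerate[OF True] by simp
    finally show ?thesis using Inf that[of ?u] by simp
  next
    case False
    let ?u = "map f [0..<(LEAST N. \<forall>i\<ge>N. f i \<notin> D)]"
    show ?thesis using assms Inf False that[of ?u] by (auto simp: prefix_def)
  qed
qed

lemma fprefix_wproj_iff:
  "fprefix v (wproj D w) \<longleftrightarrow> (\<exists>u. fprefix u w \<and> prefix v (filter (\<lambda>a. a \<in> D) u))"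
  by (metis fprefix_wproj_filter fprefix_wprojE fprefix_prefix_trans)

lemma fprefix_Fin_length: "fprefix v (Fin a) \<Longrightarrow> length v \<le> length a"
  by auto

lemma word_eqI_fprefix:
  assumes "\<And>v. fprefix v x \<longleftrightarrow> fprefix v y"
  shows "x = y"
proof (cases x; cases y)
  fix a b
  assume x: "x = Fin a" and y: "y = Fin b"
  have "prefix a b" "prefix b a"
    using assms[of a] assms[of b] x y by (auto simp: prefix_def)
  then show ?thesis using x y prefix_order.antisym by blast
next
  fix a g
  assume "x = Fin a" "y = Inf g"
  then have "fprefix (map g [0..<Suc (length a)]) (Fin a)"
    using assms[of "map g [0..<Suc (length a)]"] by simp
  then have "length (map g [0..<Suc (length a)]) \<le> length a" by (rule fprefix_Fin_length)
  then show ?thesis by simp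
next
  fix f b
  assume "x = Inf f" "y = Fin b"
  then have "fprefix (map f [0..<Suc (length b)]) (Fin b)"
    using assms[of "map f [0..<Suc (length b)]"] by simp
  then have "length (map f [0..<Suc (length b)]) \<le> length b" by (rule fprefix_Fin_length)
  then show ?thesis by simp
next
  fix f g
  assume x: "x = Inf f" and y: "y = Inf g"
  have "map f [0..<Suc n] = map g [0..<Suc n]" for n
    using assms[of "map f [0..<Suc n]"] x y by simp
  then show ?thesis using x y by auto
qed

lemma prefix_map_upt: "m \<le> n \<Longrightarrow> prefix (map f [0..<m]) (map f [0..<n])"
  using upt_add_eq_append[of 0 m "n - m"] by (simp add: prefix_def)

fun word_take :: "nat \<Rightarrow> 'a word \<Rightarrow> 'a list" where
  "word_take n (Fin l) = take n l"
| "word_take n (Inf f) = map f [0..<n]"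

definition split_seq :: "(nat \<Rightarrow> ('p, 'v) msg) \<Rightarrow> nat \<Rightarrow> ('p, 'v) act" where
  "split_seq g n = split_msg (g (n div 2)) ! (n mod 2)"

definition conc_seq :: "'a list \<Rightarrow> (nat \<Rightarrow> 'a) \<Rightarrow> nat \<Rightarrow> 'a" where
  "conc_seq z f n = (if n < length z then z ! n else f (n - length z))"

lemma split_word_Fin: "split_word (Fin l) = Fin (split_list l)"
  by (simp add: split_list_def)

lemma split_word_Inf: "split_word (Inf g) = Inf (split_seq g)"
  by (simp add: split_seq_def fun_eq_iff)

lemma nth_split_list: "n < 2 * length l \<Longrightarrow> split_list l ! n = split_msg (l ! (n div 2)) ! (n mod 2)"
proof (induction l arbitrary: n)
  case (Cons x l)
  obtain a b c where x: "x = Msg a b c" by (cases x)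
  consider "n = 0" | "n = 1" | k where "n = Suc (Suc k)" by (metis One_nat_def not0_implies_Suc)
  then show ?case
  proof cases
    case 3
    then have "k < 2 * length l" using Cons.prems by simp
    then show ?thesis using Cons.IH 3 x by simp
  qed (use x in simp_all)
qed simp

lemma map_split_seq: "map (split_seq g) [0..<2 * N] = split_list (map g [0..<N])"
  by (rule nth_equalityI) (auto simp: split_seq_def nth_split_list less_mult_imp_div_less)

lemma map_conc_seq:
  "map (conc_seq z f) [0..<n] = (if n \<le> length z then take n z else z @ map f [0..<n - length z])"
  by (rule nth_equalityI) (auto simp: conc_seq_def nth_append min_def)

lemma fprefix_conc_seq: "fprefix z (Inf (conc_seq z f))"
  using map_conc_seq[of z f "length z"] by simp

lemma word_take_mono: "n \<le> m \<Longrightarrow> prefix (word_take n g) (word_take m g)"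
proof (cases g)
  case (Fin l)
  assume "n \<le> m"
  then have "take n l = take n (take m l)" by (simp add: min_def)
  then show ?thesis using Fin by (metis word_take.simps(1) take_is_prefix)
qed (simp add: prefix_map_upt)

lemma fprefix_split_word_prefix: "fprefix u (split_word g) \<Longrightarrow> prefix u (split_list (word_take (length u) g))"
proof (cases g)
  case (Fin l)
  assume "fprefix u (split_word g)"
  then have "prefix u (split_list l)" using Fin by (simp add: split_list_def prefix_def)
  moreover have "prefix (split_list (take (length u) l)) (split_list l)"
    by (intro split_list_mono take_is_prefix)
  ultimately show ?thesis
  proof (cases "length u \<le> length l")
    case True
    then have "length u \<le> length (split_list (take (length u) l))" by simp
    then have "prefix u (split_list (take (length u) l))"
      using prefix_length_prefix \<open>prefix u (split_list l)\<close> \<open>prefix (split_list _) _\<close> by blast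
    then show ?thesis using Fin by simp
  qed (use Fin in simp)
next
  case (Inf f)
  assume "fprefix u (split_word g)"
  then have u: "u = map (split_seq f) [0..<length u]" using Inf by (simp add: split_seq_def[abs_def])
  have "prefix (map (split_seq f) [0..<length u]) (map (split_seq f) [0..<2 * length u])"
    by (simp add: prefix_map_upt)
  then show ?thesis using u Inf map_split_seq[of f "length u"] by simp
qed

lemma conc_seq_split_list_split_seq:
  "conc_seq (split_list (map g [0..<N])) (split_seq (\<lambda>k. g (k + N))) = split_seq g"
proof
  fix n
  show "conc_seq (split_list (map g [0..<N])) (split_seq (\<lambda>k. g (k + N))) n = split_seq g n"
  proof (cases "n < 2 * N")
    case True
    then have "n div 2 < N" by linarith
    then show ?thesis using True by (simp add: conc_seq_def nth_split_list split_seq_def)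
  next
    case False
    then obtain k where n: "n = 2 * N + k" by (metis le_Suc_ex not_less)
    then have "n div 2 = N + k div 2" "n mod 2 = k mod 2" by simp_all
    then show ?thesis using n by (simp add: conc_seq_def split_seq_def add.commute[of "k div 2"])
  qed
qed

lemma fprefix_wproj_conc_seq_transfer:
  assumes filters: "filter (\<lambda>x. x \<in> D) a = filter (\<lambda>x. x \<in> D) b"
    and "fprefix v (wproj D (Inf (conc_seq a f)))"
  shows "fprefix v (wproj D (Inf (conc_seq b f)))"
proof -
  obtain u where u: "fprefix u (Inf (conc_seq a f))" "prefix v (filter (\<lambda>x. x \<in> D) u)"
    using assms(2) by (rule fprefix_wprojE)
  have "\<exists>u'. fprefix u' (Inf (conc_seq b f)) \<and> prefix (filter (\<lambda>x. x \<in> D) u) (filter (\<lambda>x. x \<in> D) u')"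
  proof (cases "length u \<le> length a")
    case True
    then have "u = take (length u) a"
      using u(1) map_conc_seq[of a f "length u"] by simp
    then have "prefix u a" by (metis take_is_prefix)
    then have "prefix (filter (\<lambda>x. x \<in> D) u) (filter (\<lambda>x. x \<in> D) b)"
      using filters filter_mono_prefix by metis
    then show ?thesis using fprefix_conc_seq by blast
  next
    case False
    define k where "k = length u - length a"
    have u_eq: "u = a @ map f [0..<k]"
      using u(1) False map_conc_seq[of a f "length u"] unfolding k_def by simp
    define u' where "u' = b @ map f [0..<k]"
    have "fprefix u' (Inf (conc_seq b f))"
      using map_conc_seq[of b f "length b + k"] unfolding u'_def by simp
    moreover have "filter (\<lambda>x. x \<in> D) u = filter (\<lambda>x. x \<in> D) u'"
      unfolding u_eq u'_def using filters by simp
    ultimately show ?thesis by (metis prefix_order.refl)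
  qed
  then obtain u' where "fprefix u' (Inf (conc_seq b f))" "prefix v (filter (\<lambda>x. x \<in> D) u')"
    using u(2) prefix_order.trans by blast
  then show ?thesis using fprefix_wproj_iff by blast
qed

lemma wproj_conc_seq_cong:
  assumes "filter (\<lambda>x. x \<in> D) a = filter (\<lambda>x. x \<in> D) b"
  shows "wproj D (Inf (conc_seq a f)) = wproj D (Inf (conc_seq b f))"
  using fprefix_wproj_conc_seq_transfer[OF assms] fprefix_wproj_conc_seq_transfer[OF assms[symmetric]]
  by (intro word_eqI_fprefix iffI)

subsection \<open>Words equivalent to a split word\<close>

lemma split_word_equiv_prefix_bound:
  fixes g :: "('p, 'v) msg word"
  assumes fin: "finite (UNIV :: 'p set)" and "fprefix u w" and eq: "interswap_eq w (split_word g)"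
  shows "\<exists>N. local_prefix u (split_list (word_take N g))"
proof -
  have "\<exists>n. prefix (lproj r u) (lproj r (split_list (word_take n g)))" for r
  proof -
    have "wproj (Sigma_p r) w = wproj (Sigma_p r) (split_word g)"
      using eq by (simp add: interswap_eq_def)
    then have "fprefix (lproj r u) (wproj (Sigma_p r) (split_word g))"
      using fprefix_wproj_filter[OF \<open>fprefix u w\<close>, of "Sigma_p r"] by simp
    then obtain u' where u': "fprefix u' (split_word g)" "prefix (lproj r u) (lproj r u')"
      by (rule fprefix_wprojE)
    have "prefix (lproj r u') (lproj r (split_list (word_take (length u') g)))"
      using fprefix_split_word_prefix[OF u'(1)] by (rule filter_mono_prefix)
    then show ?thesis using u'(2) prefix_order.trans by blast
  qed
  then obtain n where n: "\<forall>r. prefix (lproj r u) (lproj r (split_list (word_take (n r) g)))"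
    by metis
  have "prefix (lproj r u) (lproj r (split_list (word_take (Max (range n)) g)))" for r
  proof -
    have "n r \<le> Max (range n)" using fin by simp
    then have "prefix (lproj r (split_list (word_take (n r) g)))
        (lproj r (split_list (word_take (Max (range n)) g)))"
      by (intro filter_mono_prefix split_list_mono word_take_mono)
    then show ?thesis using n prefix_order.trans by blast
  qed
  then show ?thesis by blast
qed

text \<open>With finitely many participants some participant acts infinitely often in an infinite
  split word, so no finite word is equivalent to it.\<close>

lemma split_word_equiv_Fin:
  fixes g :: "('p, 'v) msg word"
  assumes fin: "finite (UNIV :: 'p set)" and eq: "interswap_eq (Fin u) (split_word g)"
  shows "\<exists>l. g = Fin l"
proof (cases g)
  case (Inf f)
  have "\<exists>r::'p. infinite {n. split_seq f n \<in> Sigma_p r}"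
  proof (rule ccontr)
    assume "\<not> ?thesis"
    then have "finite (\<Union>r. {n. split_seq f n \<in> Sigma_p r})" using fin by auto
    moreover have "(\<Union>r. {n. split_seq f n \<in> Sigma_p r}) = UNIV" by (auto simp: in_Sigma_p_iff)
    ultimately show False by simp
  qed
  then obtain r where r: "infinite {n. split_seq f n \<in> Sigma_p r}" by blast
  have "wproj (Sigma_p r) (Fin u) = wproj (Sigma_p r) (split_word g)"
    using eq by (simp only: interswap_eq_def)
  also have "\<dots> = Inf (\<lambda>n. split_seq f (enumerate {i. split_seq f i \<in> Sigma_p r} n))"
    using r by (simp only: Inf split_word_Inf wproj.simps not_False_eq_True if_True)
  finally show ?thesis by simp
qed simp

lemma sb_ends_empty_split_list: "ends_empty sb (split_list l)"
proof (induction l)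
  case (Cons x l)
  obtain a b c where x: "x = Msg a b c" by (cases x)
  have "ends_empty sb [Snd a b c, Rcv a b c]"
    by (simp add: sb_def chi0_def fifo_insert_def fun_eq_iff)
  then show ?case
    using Cons x ch_run_append[of sb "chi0 sb" "[Snd a b c, Rcv a b c]" "split_list l"] by simp
qed simp

lemma arch_lang_sb_conc_split_seq:
  assumes "compliant sb z" "ends_empty sb z"
  shows "Inf (conc_seq z (split_seq g)) \<in> arch_lang sb"
  unfolding arch_lang_def
proof (intro UnI2 CollectI exI conjI allI)
  fix n
  show "compliant sb (map (conc_seq z (split_seq g)) [0..<n])"
  proof (cases "n \<le> length z")
    case True
    then show ?thesis
      using compliant_prefix[OF assms(1) take_is_prefix] map_conc_seq[of z "split_seq g" n] by simp
  next
    case False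
    define k where "k = n - length z"
    have "prefix (map (split_seq g) [0..<k]) (map (split_seq g) [0..<2 * k])"
      by (simp add: prefix_map_upt)
    then have "prefix (z @ map (split_seq g) [0..<k]) (z @ split_list (map g [0..<k]))"
      by (simp add: map_split_seq)
    moreover have "compliant sb (z @ split_list (map g [0..<k]))"
      using assms(2) sb_ends_empty_split_list[of "map g [0..<k]"]
      by (simp add: compliant_def ch_run_append)
    ultimately have "compliant sb (z @ map (split_seq g) [0..<k])"
      by (rule compliant_prefix[rotated])
    then show ?thesis using False map_conc_seq[of z "split_seq g" n] k_def by simp
  qed
qed simp

text \<open>The remaining messages of an infinite split word are appended in split form after the
  completed finite part; under sender buffers the channels are empty at the junction.\<close>

lemma sb_extension_of_local_prefix:
  assumes "compliant sb u" and N: "local_prefix u (split_list (word_take N g))"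
  shows "\<exists>w'. interswap_eq w' (split_word g) \<and> w' \<in> arch_lang sb \<and> fprefix u w'"
proof (cases g)
  case (Fin l)
  have "prefix (split_list (word_take N g)) (split_list l)"
    using Fin by (simp add: split_list_mono take_is_prefix)
  then have "local_prefix u (split_list l)"
    using N filter_mono_prefix prefix_order.trans by metis
  then obtain x where x: "compliant sb (u @ x)" "\<forall>r. lproj r (u @ x) = lproj r (split_list l)"
    using sb_completion_to_split \<open>compliant sb u\<close> by blast
  then have "interswap_eq (Fin (u @ x)) (split_word g)"
    unfolding interswap_eq_def Fin split_word_Fin wproj.simps by simp
  moreover have "Fin (u @ x) \<in> arch_lang sb" using x(1) by (simp add: arch_lang_def)
  ultimately show ?thesis by fastforce
next
  case (Inf f)
  define h where "h = map f [0..<N]"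
  obtain x where x: "compliant sb (u @ x)" "\<forall>r. lproj r (u @ x) = lproj r (split_list h)"
    using sb_completion_to_split \<open>compliant sb u\<close> N Inf h_def by fastforce
  define w' where "w' = Inf (conc_seq (u @ x) (split_seq (\<lambda>k. f (k + N))))"
  have "wproj (Sigma_p p) w' = wproj (Sigma_p p) (split_word g)" for p
  proof -
    have "wproj (Sigma_p p) w' =
        wproj (Sigma_p p) (Inf (conc_seq (split_list h) (split_seq (\<lambda>k. f (k + N)))))"
      unfolding w'_def using x(2) by (intro wproj_conc_seq_cong) blast
    then show ?thesis unfolding h_def conc_seq_split_list_split_seq Inf split_word_Inf .
  qed
  moreover have "w' \<in> arch_lang sb"
    unfolding w'_def using x sb_ends_empty_if_views_split by (blast intro: arch_lang_sb_conc_split_seq)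
  moreover have "fprefix u w'"
    using map_conc_seq[of "u @ x" _ "length u"] by (simp add: w'_def)
  ultimately show ?thesis by (auto simp: interswap_eq_def)
qed

lemma sb_extension_in_equiv_class:
  fixes g :: "('p, 'v) msg word"
  assumes "finite (UNIV :: 'p set)" "compliant sb u" "fprefix u w" "interswap_eq w (split_word g)"
  shows "\<exists>w'. interswap_eq w' (split_word g) \<and> w' \<in> arch_lang sb \<and> fprefix u w'"
  using split_word_equiv_prefix_bound[OF assms(1,3,4)] sb_extension_of_local_prefix[OF assms(2)]
  by blast

subsection \<open>The semantics of a protocol under an architecture\<close>

abbreviation split_closure :: "('s, 'p, 'v) gproto \<Rightarrow> ('p, 'v) act word set" where
  "split_closure S \<equiv> eq_closure (split_word ` glang S)"

lemma arch_lang_fprefix_compliant: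
  assumes "w \<in> arch_lang A" "fprefix u w"
  shows "compliant A u"
proof (cases w)
  case (Fin x)
  then show ?thesis using assms by (auto simp: arch_lang_def intro: compliant_append_left)
next
  case (Inf f)
  have "compliant A (map f [0..<length u])" using assms(1) Inf by (simp add: arch_lang_def)
  moreover have "u = map f [0..<length u]" using assms(2) Inf by simp
  ultimately show ?thesis by metis
qed

lemma arch_lang_if_fprefixes_compliant: "(\<And>u. fprefix u w \<Longrightarrow> compliant A u) \<Longrightarrow> w \<in> arch_lang A"
  by (cases w) (auto simp: arch_lang_def)

lemma arch_lang_mono: "(\<And>u. compliant B u \<Longrightarrow> compliant A u) \<Longrightarrow> arch_lang B \<subseteq> arch_lang A"
  by (auto simp: arch_lang_def)

lemma finite_split_closure_subset: "eq_closure {w \<in> split_word ` glang S. is_fin w} \<subseteq> split_closure S"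
  by (auto simp: eq_closure_def)

lemma sem_subset_arch_lang: "sem A S \<subseteq> arch_lang A"
proof
  fix w
  assume w: "w \<in> sem A S"
  show "w \<in> arch_lang A"
  proof (cases "w \<in> arch_lang A")
    case False
    then have "\<forall>u. fprefix u w \<longrightarrow> u \<in> pref (split_closure S \<inter> arch_lang A)"
      using w by (auto simp: sem_def)
    then show ?thesis
      by (intro arch_lang_if_fprefixes_compliant) (auto simp: pref_def intro: arch_lang_fprefix_compliant)
  qed
qed

lemma sem_fprefixE:
  assumes "w \<in> sem A S" "fprefix u w"
  obtains w' where "w' \<in> split_closure S \<inter> arch_lang A" "fprefix u w'"
  using assms finite_split_closure_subset by (auto simp: sem_def pref_def)

lemma split_closure_inter_subset_sem:
  fixes S :: "('s, 'p, 'v) gproto"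
  assumes fin: "finite (UNIV :: 'p set)"
  shows "split_closure S \<inter> arch_lang A \<subseteq> sem A S"
proof
  fix w
  assume w: "w \<in> split_closure S \<inter> arch_lang A"
  show "w \<in> sem A S"
  proof (cases w)
    case (Fin x)
    obtain g where g: "g \<in> glang S" "interswap_eq w (split_word g)"
      using w by (auto simp: eq_closure_def)
    obtain l where "g = Fin l" using split_word_equiv_Fin[OF fin] g(2) Fin by blast
    then have "is_fin (split_word g)" by (simp add: is_fin_def)
    then have "w \<in> eq_closure {w \<in> split_word ` glang S. is_fin w}"
      using g by (auto simp: eq_closure_def)
    then show ?thesis using w by (simp add: sem_def)
  next
    case (Inf f)
    have "\<forall>u. fprefix u w \<longrightarrow> u \<in> pref (split_closure S \<inter> arch_lang A)"
      using w unfolding pref_def by blast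
    moreover have "is_inf w" using Inf by (simp add: is_inf_def)
    ultimately show ?thesis by (simp add: sem_def)
  qed
qed

lemma sem_cong:
  assumes "split_closure S \<inter> arch_lang A = split_closure S \<inter> arch_lang B"
  shows "sem A S = sem B S"
proof -
  have "eq_closure {w \<in> split_word ` glang S. is_fin w} \<inter> arch_lang A =
      eq_closure {w \<in> split_word ` glang S. is_fin w} \<inter> arch_lang B"
    using assms finite_split_closure_subset[of S] by blast
  then show ?thesis unfolding sem_def assms by simp
qed

lemma sem_eq_inter_arch_lang:
  assumes sub: "arch_lang B \<subseteq> arch_lang A"
    and extends: "\<And>w u. w \<in> sem A S \<Longrightarrow> fprefix u w \<Longrightarrow> compliant B u \<Longrightarrow> \<exists>w' \<in> sem B S. fprefix u w'"
  shows "sem B S = sem A S \<inter> arch_lang B"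
proof
  have "pref (split_closure S \<inter> arch_lang B) \<subseteq> pref (split_closure S \<inter> arch_lang A)"
    using sub by (auto simp: pref_def)
  then show "sem B S \<subseteq> sem A S \<inter> arch_lang B"
    using sub sem_subset_arch_lang[of B S] unfolding sem_def by blast
  show "sem A S \<inter> arch_lang B \<subseteq> sem B S"
  proof
    fix x
    assume x: "x \<in> sem A S \<inter> arch_lang B"
    show "x \<in> sem B S"
    proof (cases "x \<in> eq_closure {w \<in> split_word ` glang S. is_fin w}")
      case True
      then show ?thesis using x by (simp add: sem_def)
    next
      case False
      have "u \<in> pref (split_closure S \<inter> arch_lang B)" if u: "fprefix u x" for u
      proof -
        have "compliant B u" "x \<in> sem A S"
          using x u arch_lang_fprefix_compliant by blast+
        then obtain w' where "w' \<in> sem B S" "fprefix u w'"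
          using extends u by blast
        then show ?thesis by (auto simp: pref_def elim: sem_fprefixE)
      qed
      moreover have "is_inf x" using False x by (simp add: sem_def)
      ultimately show ?thesis by (simp add: sem_def)
    qed
  qed
qed

subsection \<open>Runs of communicating LTSs\<close>

definition local_step :: "('q, 'p, 'v) clts \<Rightarrow> ('p \<Rightarrow> 'q) \<Rightarrow> ('p, 'v) act \<Rightarrow> ('p \<Rightarrow> 'q) option" where
  "local_step T Q a =
     (case ddelta (T (actor a)) (Q (actor a)) a of None \<Rightarrow> None | Some q \<Rightarrow> Some (Q(actor a := q)))"

fun local_run :: "('q, 'p, 'v) clts \<Rightarrow> ('p \<Rightarrow> 'q) \<Rightarrow> ('p, 'v) act list \<Rightarrow> ('p \<Rightarrow> 'q) option" where
  "local_run T Q [] = Some Q"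
| "local_run T Q (a # w) = (case local_step T Q a of None \<Rightarrow> None | Some Q' \<Rightarrow> local_run T Q' w)"

abbreviation local_init :: "('q, 'p, 'v) clts \<Rightarrow> 'p \<Rightarrow> 'q" where
  "local_init T \<equiv> \<lambda>p. dinit (T p)"

lemma local_run_append:
  "local_run T Q (xs @ ys) = (case local_run T Q xs of None \<Rightarrow> None | Some Q' \<Rightarrow> local_run T Q' ys)"
  by (induction xs arbitrary: Q) (auto split: option.split)

lemma cstep_iff:
  "cstep A T c a c' \<longleftrightarrow>
     (\<exists>Q' \<chi>'. local_step T (fst c) a = Some Q' \<and> ch_step A (snd c) a = Some \<chi>' \<and> c' = (Q', \<chi>'))"
  by (auto simp: cstep_def local_step_def split: option.splits)

lemma creach_iff:
  "creach A T c w c' \<longleftrightarrow> local_run T (fst c) w = Some (fst c') \<and> ch_run A (snd c) w = Some (snd c')"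
proof (induction w arbitrary: c)
  case Nil
  have "creach A T c [] c' \<longleftrightarrow> c' = c" by (auto elim: creach.cases intro: creach.intros)
  then show ?case by (auto simp: prod_eq_iff)
next
  case (Cons a w)
  have "creach A T c (a # w) c' \<longleftrightarrow> (\<exists>c1. cstep A T c a c1 \<and> creach A T c1 w c')"
    by (blast elim: creach.cases intro: creach.intros)
  then show ?case unfolding cstep_iff Cons.IH by (auto split: option.splits)
qed

lemma creach_deterministic: "creach A T c w c1 \<Longrightarrow> creach A T c w c2 \<Longrightarrow> c1 = c2"
  by (auto simp: creach_iff prod_eq_iff)

lemma creach_snoc_iff: "creach A T c (u @ [a]) c'' \<longleftrightarrow> (\<exists>c'. creach A T c u c' \<and> cstep A T c' a c'')"
  unfolding creach_iff cstep_iff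
  by (auto simp: local_run_append ch_run_append local_step_def split: option.splits)

lemma reachable_iff:
  "(\<exists>c. creach A T (cinit A T) w c) \<longleftrightarrow> local_run T (local_init T) w \<noteq> None \<and> compliant A w"
  by (auto simp: creach_iff compliant_def cinit_def)

lemma reachable_prefix:
  assumes "creach A T (cinit A T) w c" "prefix u w"
  shows "\<exists>c'. creach A T (cinit A T) u c'"
proof -
  obtain v where w: "w = u @ v" using assms(2) prefix_def by blast
  have "local_run T (local_init T) w \<noteq> None" "compliant A w"
    using assms(1) reachable_iff by blast+
  then have "local_run T (local_init T) u \<noteq> None" "compliant A u"
    unfolding w by (auto simp: local_run_append intro: compliant_append_left split: option.splits)
  then show ?thesis using reachable_iff by blast
qed

lemma Fin_in_clts_lang_iff:
  "Fin w \<in> clts_lang A T \<longleftrightarrow>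
     (\<exists>Q. local_run T (local_init T) w = Some Q \<and> (\<forall>p. Q p \<in> dfinal (T p))) \<and> ends_empty A w"
  by (auto simp: clts_lang_def creach_iff cfinal_def cinit_def)

lemma Inf_in_clts_lang_iff:
  "Inf f \<in> clts_lang A T \<longleftrightarrow> (\<forall>n. \<exists>c. creach A T (cinit A T) (map f [0..<n]) c)"
proof
  assume "Inf f \<in> clts_lang A T"
  then obtain \<rho> where \<rho>: "\<rho> 0 = cinit A T" "\<forall>n. cstep A T (\<rho> n) (f n) (\<rho> (Suc n))"
    by (auto simp: clts_lang_def)
  have "creach A T (cinit A T) (map f [0..<n]) (\<rho> n)" for n
  proof (induction n)
    case 0
    then show ?case using \<rho>(1) creach_nil by simp
  next
    case (Suc n)
    then show ?case using creach_snoc_iff \<rho>(2) by fastforce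
  qed
  then show "\<forall>n. \<exists>c. creach A T (cinit A T) (map f [0..<n]) c" by blast
next
  assume "\<forall>n. \<exists>c. creach A T (cinit A T) (map f [0..<n]) c"
  then obtain \<rho> where \<rho>: "\<And>n. creach A T (cinit A T) (map f [0..<n]) (\<rho> n)" by metis
  have "\<rho> 0 = cinit A T" using \<rho>[of 0] by (simp add: creach_iff prod_eq_iff)
  moreover have "cstep A T (\<rho> n) (f n) (\<rho> (Suc n))" for n
  proof -
    obtain c' where "creach A T (cinit A T) (map f [0..<n]) c'" "cstep A T c' (f n) (\<rho> (Suc n))"
      using \<rho>[of "Suc n"] creach_snoc_iff by fastforce
    then show ?thesis using creach_deterministic[OF _ \<rho>[of n]] by blast
  qed
  ultimately show "Inf f \<in> clts_lang A T" unfolding clts_lang_def by blast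
qed

lemma clts_lang_fprefix_reachable:
  assumes "w \<in> clts_lang A T" "fprefix u w"
  shows "\<exists>c. creach A T (cinit A T) u c"
proof (cases w)
  case (Fin x)
  then obtain c where "creach A T (cinit A T) x c" using assms(1) by (auto simp: clts_lang_def)
  moreover have "prefix u x" using assms(2) Fin by (auto simp: prefix_def)
  ultimately show ?thesis by (rule reachable_prefix)
next
  case (Inf f)
  then have "u = map f [0..<length u]" using assms(2) by simp
  then show ?thesis using assms(1) Inf Inf_in_clts_lang_iff by metis
qed

lemma clts_lang_refine:
  assumes "arch_refines B A"
  shows "clts_lang B T = clts_lang A T \<inter> arch_lang B"
proof (rule set_eqI)
  fix w
  show "w \<in> clts_lang B T \<longleftrightarrow> w \<in> clts_lang A T \<inter> arch_lang B"
  proof (cases w)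
    case (Fin x)
    have "ends_empty B x \<Longrightarrow> compliant B x" by (simp add: compliant_def)
    then show ?thesis
      using Fin assms by (auto simp: arch_refines_def Fin_in_clts_lang_iff arch_lang_def)
  next
    case (Inf f)
    show ?thesis
      using assms unfolding Inf Int_iff Inf_in_clts_lang_iff reachable_iff arch_refines_def arch_lang_def
      by auto
  qed
qed

lemma prefix_map_conc_seq: "prefix (map (conc_seq u f) [0..<n]) (u @ map f [0..<n])"
  by (auto simp: map_conc_seq prefix_map_upt take_is_prefix intro: prefix_order.trans)

lemma fprefix_snoc_ex: "fprefix u w \<Longrightarrow> w \<noteq> Fin u \<Longrightarrow> \<exists>b. fprefix (u @ [b]) w"
proof (cases w)
  case (Fin x)
  assume "fprefix u w" "w \<noteq> Fin u"
  then obtain v where "x = u @ v" "v \<noteq> []" using Fin by auto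
  then show ?thesis using Fin by (cases v) auto
next
  case (Inf f)
  assume "fprefix u w"
  then have "u @ [f (length u)] = map f [0..<length (u @ [f (length u)])]" using Inf by simp
  then show ?thesis using Inf by (metis fprefix.simps(2))
qed

lemma deadlock_free_run_until_final:
  assumes df: "clts_deadlock_free A T" and "creach A T (cinit A T) u c"
  obtains as cs where
    "\<And>n. \<forall>k<n. \<not> cfinal A T (cs k) \<Longrightarrow> creach A T (cinit A T) (u @ map as [0..<n]) (cs n)"
proof -
  define nxt where "nxt c = (SOME ac. cstep A T c (fst ac) (snd ac))" for c
  define cs where "cs = rec_nat c (\<lambda>_ c. snd (nxt c))"
  define as where "as n = fst (nxt (cs n))" for n
  have "creach A T (cinit A T) (u @ map as [0..<n]) (cs n)" if "\<forall>k<n. \<not> cfinal A T (cs k)" for n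
    using that
  proof (induction n)
    case 0
    then show ?case using \<open>creach A T (cinit A T) u c\<close> by (simp add: cs_def)
  next
    case (Suc n)
    then have run_n: "creach A T (cinit A T) (u @ map as [0..<n]) (cs n)" by simp
    then obtain a c' where "cstep A T (cs n) a c'"
      using df Suc.prems unfolding clts_deadlock_free_def by blast
    then have "cstep A T (cs n) (as n) (cs (Suc n))"
      unfolding as_def cs_def nxt_def
      by (simp add: someI[where P = "\<lambda>ac. cstep A T _ (fst ac) (snd ac)" and x = "(a, c')"])
    then have "creach A T (cinit A T) ((u @ map as [0..<n]) @ [as n]) (cs (Suc n))"
      using run_n creach_snoc_iff by blast
    then show ?case by simp
  qed
  then show ?thesis using that by blast
qed

lemma deadlock_free_reachable_extends:
  assumes "clts_deadlock_free A T" "creach A T (cinit A T) u c"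
  shows "\<exists>w \<in> clts_lang A T. fprefix u w"
proof -
  obtain as cs where run:
    "\<And>n. \<forall>k<n. \<not> cfinal A T (cs k) \<Longrightarrow> creach A T (cinit A T) (u @ map as [0..<n]) (cs n)"
    using deadlock_free_run_until_final[OF assms] by blast
  show ?thesis
  proof (cases "\<exists>n. cfinal A T (cs n)")
    case True
    define n where "n = (LEAST n. cfinal A T (cs n))"
    have "cfinal A T (cs n)" "\<forall>k<n. \<not> cfinal A T (cs k)"
      using LeastI_ex[OF True] not_less_Least unfolding n_def by blast+
    then have "Fin (u @ map as [0..<n]) \<in> clts_lang A T"
      using run unfolding clts_lang_def by blast
    moreover have "fprefix u (Fin (u @ map as [0..<n]))" by simp
    ultimately show ?thesis by blast
  next
    case False
    have "\<exists>c. creach A T (cinit A T) (map (conc_seq u as) [0..<n]) c" for n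
      using run[of n] False reachable_prefix[OF _ prefix_map_conc_seq] by blast
    then have "Inf (conc_seq u as) \<in> clts_lang A T" by (simp add: Inf_in_clts_lang_iff)
    then show ?thesis using fprefix_conc_seq by blast
  qed
qed

lemma deadlock_free_if_reachable_extends:
  assumes "\<And>u c. creach A T (cinit A T) u c \<Longrightarrow> \<exists>w \<in> clts_lang A T. fprefix u w"
  shows "clts_deadlock_free A T"
  unfolding clts_deadlock_free_def
proof (intro allI impI)
  fix u c
  assume c: "creach A T (cinit A T) u c \<and> \<not> cfinal A T c"
  then obtain w where w: "w \<in> clts_lang A T" "fprefix u w" using assms by blast
  show "\<exists>a c'. cstep A T c a c'"
  proof (cases "w = Fin u")
    case True
    then obtain c' where "creach A T (cinit A T) u c'" "cfinal A T c'"
      using w(1) unfolding clts_lang_def by blast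
    then show ?thesis using c creach_deterministic by blast
  next
    case False
    then obtain b where "fprefix (u @ [b]) w" using fprefix_snoc_ex w(2) by blast
    then obtain c2 where "creach A T (cinit A T) (u @ [b]) c2"
      using clts_lang_fprefix_reachable w(1) by blast
    then obtain c' where "creach A T (cinit A T) u c'" "cstep A T c' b c2"
      using creach_snoc_iff by blast
    then show ?thesis using c creach_deterministic by blast
  qed
qed

subsection \<open>Transferring implementations\<close>

lemma implementable_transfer:
  fixes A :: "('p, 'v, 'c, 'b) arch" and B :: "('p, 'v, 'd, 'e) arch"
  assumes refines: "arch_refines B A"
    and extends: "\<And>w u. w \<in> sem A S \<Longrightarrow> fprefix u w \<Longrightarrow> compliant B u \<Longrightarrow> \<exists>w' \<in> sem B S. fprefix u w'"
    and "implementable A S"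
  shows "implementable B S"
proof -
  obtain T :: "(('p, 'v) act list, 'p, 'v) clts" where
    T: "clts_wf T" "clts_deadlock_free A T" "clts_lang A T = sem A S"
    using \<open>implementable A S\<close> unfolding implementable_def by blast
  have "arch_lang B \<subseteq> arch_lang A"
    using refines by (intro arch_lang_mono) (simp add: arch_refines_def)
  then have "sem B S = sem A S \<inter> arch_lang B"
    by (rule sem_eq_inter_arch_lang[OF _ extends])
  moreover have "clts_lang B T = clts_lang A T \<inter> arch_lang B"
    by (rule clts_lang_refine[OF refines])
  ultimately have lang: "clts_lang B T = sem B S"
    using T(3) by simp
  have "clts_deadlock_free B T"
  proof (rule deadlock_free_if_reachable_extends)
    fix u c
    assume "creach B T (cinit B T) u c"
    then have "local_run T (local_init T) u \<noteq> None" "compliant B u"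
      by (metis reachable_iff)+
    moreover from \<open>compliant B u\<close> have "compliant A u"
      using refines unfolding arch_refines_def by blast
    ultimately have "\<exists>c'. creach A T (cinit A T) u c'" by (metis reachable_iff)
    then obtain c' where "creach A T (cinit A T) u c'" ..
    then obtain w where "w \<in> sem A S" "fprefix u w"
      using deadlock_free_reachable_extends[OF T(2)] T(3) by blast
    then show "\<exists>w \<in> clts_lang B T. fprefix u w"
      unfolding lang by (rule extends[OF _ _ \<open>compliant B u\<close>])
  qed
  then show ?thesis using T(1) lang unfolding implementable_def by blast
qed

lemma sem_p2p_eq_sem_bag:
  fixes S :: "('s, 'p, 'v) gproto"
  assumes fin: "finite (UNIV :: 'p set)"
  shows "sem p2p S = sem bag S"
proof (rule sem_cong)
  have "w \<in> arch_lang p2p" if w: "w \<in> split_closure S \<inter> arch_lang bag" for w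
  proof (rule arch_lang_if_fprefixes_compliant)
    fix u
    assume "fprefix u w"
    obtain g where "interswap_eq w (split_word g)" using w by (auto simp: eq_closure_def)
    then obtain N where "local_prefix u (split_list (word_take N g))"
      using split_word_equiv_prefix_bound[OF fin \<open>fprefix u w\<close>] by blast
    moreover have "compliant bag u" using w \<open>fprefix u w\<close> arch_lang_fprefix_compliant by blast
    ultimately show "compliant p2p u" using compliant_p2p_if_bag_local_prefix_split by blast
  qed
  moreover have "arch_lang p2p \<subseteq> arch_lang bag"
    by (rule arch_lang_mono) (rule compliant_p2p_imp_bag)
  ultimately show "split_closure S \<inter> arch_lang p2p = split_closure S \<inter> arch_lang bag" by blast
qed

lemma implementable_p2p_if_bag:
  fixes S :: "('s, 'p, 'v) gproto"
  assumes "finite (UNIV :: 'p set)" "implementable bag S"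
  shows "implementable p2p S"
  by (rule implementable_transfer[OF p2p_refines_bag _ assms(2)])
    (use sem_p2p_eq_sem_bag[OF assms(1)] in blast)

lemma sem_sb_prefix_extends:
  fixes S :: "('s, 'p, 'v) gproto"
  assumes fin: "finite (UNIV :: 'p set)"
    and "w \<in> sem A S" "fprefix u w" "compliant sb u"
  shows "\<exists>w' \<in> sem sb S. fprefix u w'"
proof -
  obtain w0 where "w0 \<in> split_closure S" "fprefix u w0"
    using sem_fprefixE[OF assms(2,3)] by blast
  then obtain g where g: "g \<in> glang S" "interswap_eq w0 (split_word g)"
    by (auto simp: eq_closure_def)
  obtain w' where w': "interswap_eq w' (split_word g)" "w' \<in> arch_lang sb" "fprefix u w'"
    using sb_extension_in_equiv_class[OF fin \<open>compliant sb u\<close> \<open>fprefix u w0\<close> g(2)] by blast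
  then have "w' \<in> split_closure S \<inter> arch_lang sb" using g(1) by (auto simp: eq_closure_def)
  then show ?thesis using split_closure_inter_subset_sem[OF fin] w'(3) by blast
qed

lemma implementable_sb_if_p2p:
  fixes S :: "('s, 'p, 'v) gproto"
  assumes "finite (UNIV :: 'p set)" "implementable p2p S"
  shows "implementable sb S"
  by (rule implementable_transfer[OF sb_refines_p2p _ assms(2)])
    (rule sem_sb_prefix_extends[OF assms(1)])

theorem lemma7p9:
  fixes S :: "('s, 'p, 'v) gproto"
  assumes "finite (UNIV :: 'p set)"
  shows "(global_protocol S \<and> implementable bag S \<longrightarrow> implementable p2p S) \<and>
         (global_protocol S \<and> implementable p2p S \<longrightarrow> implementable sb S)"
  using implementable_p2p_if_bag[OF assms] implementable_sb_if_p2p[OF assms] by blast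

end
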